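(* The GePUP-E formulation (described in the context) is equivalent to the incompressible Navier–Stokes equations with no-slip conditions, $\partial_t\mathbf{u}+\mathbf{u}\cdot\nabla\mathbf{u}=\mathbf{g}-\nabla p+\nu\Delta\mathbf{u}$, $\nabla\cdot\mathbf{u}=0$ in $\Omega$, $\mathbf{u}=\mathbf{0}$ on $\partial\Omega$.
   Context: $\Omega\subset\mathbb{R}^D$ is a bounded connected open set with sufficiently smooth boundary, unit outward normal $\mathbf{n}$ and unit tangent vector(s) $\boldsymbol{\tau}$ on $\partial\Omega$. $\nu>0$ is the kinematic viscosity, $\mathbf{g}$ a given body force, $\lambda\ge 0$ a penalty parameter. The Leray–Helmholtz projection $\mathscr{P}$ maps a $C^1$ vector field $\mathbf{v}^*$ to $\mathbf{v}^*-\nabla\phi$ where $\Delta\phi=\nabla\cdot\mathbf{v}^*$ in $\Omega$ and $\mathbf{n}\cdot\nabla\phi=\mathbf{n}\cdot\mathbf{v}^*$ on $\partial\Omega$. The GePUP-E formulation is the system for $(\mathbf{w},\mathbf{u},q)$, where $\mathbf{w}=\mathbf{u}-\nabla\phi$ is a (possibly non-solenoidal) velocity: $\partial_t\mathbf{w}=\mathbf{g}-\mathbf{u}\cdot\nabla\mathbf{u}-\nabla q+\nu\Delta\mathbf{w}$ in $\Omega$; $\mathbf{w}\cdot\boldsymbol{\tau}=0$ and $\nabla\cdot\mathbf{w}=0$ on $\partial\Omega$; $\mathbf{u}=\mathscr{P}\mathbf{w}$ in $\Omega$, $\mathbf{u}\cdot\mathbf{n}=0$ on $\partial\Omega$; $\Delta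 q=\nabla\cdot(\mathbf{g}-\mathbf{u}\cdot\nabla\mathbf{u})$ in $\Omega$; $\mathbf{n}\cdot\nabla q=\mathbf{n}\cdot(\mathbf{g}-\mathbf{u}\cdot\nabla\mathbf{u}+\nu\Delta\mathbf{w})+\lambda\,\mathbf{n}\cdot\mathbf{w}$ on $\partial\Omega$; with initial condition $\mathbf{w}(\mathbf{x},t_0)=\mathbf{u}(\mathbf{x},t_0)$ for all $\mathbf{x}\in\overline{\Omega}$. *)

theory Defs
  imports "HOL-Analysis.Analysis"
begin

fun Ck :: "nat \<Rightarrow> 'a::euclidean_space set \<Rightarrow> ('a \<Rightarrow> 'b::real_normed_vector) \<Rightarrow> bool" where
  "Ck 0 S f = continuous_on S f"
| "Ck (Suc k) S f = ((\<forall>x\<in>S. f differentiable (at x)) \<and>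
      (\<forall>i\<in>Basis. Ck k S (\<lambda>x. frechet_derivative f (at x) i)))"

definition smooth_on_set :: "'a::euclidean_space set \<Rightarrow> ('a \<Rightarrow> 'b::real_normed_vector) \<Rightarrow> bool" where
  "smooth_on_set S f \<longleftrightarrow> (\<forall>k. Ck k S f)"

definition dirD :: "('a::euclidean_space \<Rightarrow> 'b::real_normed_vector) \<Rightarrow> 'a \<Rightarrow> 'a \<Rightarrow> 'b" where
  "dirD f x h = frechet_derivative f (at x) h"

definition grad :: "('a::euclidean_space \<Rightarrow> real) \<Rightarrow> 'a \<Rightarrow> 'a" where
  "grad f x = (\<Sum>i\<in>Basis. dirD f x i *\<^sub>R i)"

definition divg :: "('a::euclidean_space \<Rightarrow> 'a) \<Rightarrow> 'a \<Rightarrow> real" where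
  "divg v x = (\<Sum>i\<in>Basis. dirD v x i \<bullet> i)"

definition lap :: "('a::euclidean_space \<Rightarrow> 'b::real_normed_vector) \<Rightarrow> 'a \<Rightarrow> 'b" where
  "lap f x = (\<Sum>i\<in>Basis. dirD (\<lambda>y. dirD f y i) x i)"

definition conv :: "('a::euclidean_space \<Rightarrow> 'a) \<Rightarrow> ('a \<Rightarrow> 'b::real_normed_vector) \<Rightarrow> 'a \<Rightarrow> 'b" where
  "conv u v x = dirD v x (u x)"

definition dt :: "real \<Rightarrow> real \<Rightarrow> (real \<Rightarrow> 'a \<Rightarrow> 'b::real_normed_vector) \<Rightarrow> real \<Rightarrow> 'a \<Rightarrow> 'b" where
  "dt t0 T w t x = vector_derivative (\<lambda>s. w s x) (at t within {t0..T})"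

definition smooth_boundary_normal :: "'a::euclidean_space set \<Rightarrow> ('a \<Rightarrow> 'a) \<Rightarrow> bool" where
  "smooth_boundary_normal \<Omega> nrm \<longleftrightarrow>
     (\<forall>x\<in>frontier \<Omega>. \<exists>U psi. open U \<and> x \<in> U \<and> smooth_on_set U (psi :: 'a \<Rightarrow> real) \<and>
        (\<forall>y\<in>U. grad psi y \<noteq> 0) \<and> \<Omega> \<inter> U = {y\<in>U. psi y < 0} \<and>
        (\<forall>y\<in>U \<inter> frontier \<Omega>. nrm y = (1 / norm (grad psi y)) *\<^sub>R grad psi y))"

definition leray_proj :: "'a::euclidean_space set \<Rightarrow> ('a \<Rightarrow> 'a) \<Rightarrow> ('a \<Rightarrow> 'a) \<Rightarrow> ('a \<Rightarrow> 'a) \<Rightarrow> bool" where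
  "leray_proj \<Omega> nrm v u \<longleftrightarrow>
     (\<exists>phi :: 'a \<Rightarrow> real. (\<exists>V. open V \<and> closure \<Omega> \<subseteq> V \<and> smooth_on_set V phi) \<and>
        (\<forall>x\<in>\<Omega>. lap phi x = divg v x) \<and>
        (\<forall>x\<in>frontier \<Omega>. nrm x \<bullet> grad phi x = nrm x \<bullet> v x) \<and>
        (\<forall>x\<in>closure \<Omega>. u x = v x - grad phi x))"

definition regular_field :: "real \<Rightarrow> real \<Rightarrow> 'a::euclidean_space set \<Rightarrow> (real \<Rightarrow> 'a \<Rightarrow> 'b::real_normed_vector) \<Rightarrow> bool" where
  "regular_field t0 T \<Omega> f \<longleftrightarrow>
     (\<exists>V. open V \<and> {t0..T} \<times> closure \<Omega> \<subseteq> V \<and> smooth_on_set V (\<lambda>(t,x). f t x))"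

definition GePUP_E ::
  "'a::euclidean_space set \<Rightarrow> ('a \<Rightarrow> 'a) \<Rightarrow> real \<Rightarrow> real \<Rightarrow> (real \<Rightarrow> 'a \<Rightarrow> 'a) \<Rightarrow> real \<Rightarrow> real \<Rightarrow>
   (real \<Rightarrow> 'a \<Rightarrow> 'a) \<Rightarrow> (real \<Rightarrow> 'a \<Rightarrow> 'a) \<Rightarrow> (real \<Rightarrow> 'a \<Rightarrow> real) \<Rightarrow> bool" where
  "GePUP_E \<Omega> nrm \<nu> lam g t0 T w u q \<longleftrightarrow>
     (\<forall>t\<in>{t0..T}.
        (\<forall>x\<in>\<Omega>. dt t0 T w t x = g t x - conv (u t) (u t) x - grad (q t) x + \<nu> *\<^sub>R lap (w t) x) \<and>
        (\<forall>x\<in>frontier \<Omega>. (\<forall>\<tau>. norm \<tau> = 1 \<and> \<tau> \<bullet> nrm x = 0 \<longrightarrow> w t x \<bullet> \<tau> = 0) \<and>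
                          divg (w t) x = 0) \<and>
        leray_proj \<Omega> nrm (w t) (u t) \<and>
        (\<forall>x\<in>frontier \<Omega>. u t x \<bullet> nrm x = 0) \<and>
        (\<forall>x\<in>\<Omega>. lap (q t) x = divg (\<lambda>y. g t y - conv (u t) (u t) y) x) \<and>
        (\<forall>x\<in>frontier \<Omega>. nrm x \<bullet> grad (q t) x =
            nrm x \<bullet> (g t x - conv (u t) (u t) x + \<nu> *\<^sub>R lap (w t) x) + lam * (nrm x \<bullet> w t x))) \<and>
     (\<forall>x\<in>closure \<Omega>. w t0 x = u t0 x)"

definition INSE_noslip ::
  "'a::euclidean_space set \<Rightarrow> real \<Rightarrow> (real \<Rightarrow> 'a \<Rightarrow> 'a) \<Rightarrow> real \<Rightarrow> real \<Rightarrow>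
   (real \<Rightarrow> 'a \<Rightarrow> 'a) \<Rightarrow> (real \<Rightarrow> 'a \<Rightarrow> real) \<Rightarrow> bool" where
  "INSE_noslip \<Omega> \<nu> g t0 T u p \<longleftrightarrow>
     (\<forall>t\<in>{t0..T}.
        (\<forall>x\<in>\<Omega>. dt t0 T u t x + conv (u t) (u t) x = g t x - grad (p t) x + \<nu> *\<^sub>R lap (u t) x) \<and>
        (\<forall>x\<in>\<Omega>. divg (u t) x = 0) \<and>
        (\<forall>x\<in>frontier \<Omega>. u t x = 0))"

end

theory Submission
  imports Defs
begin

text \<open>If \<open>(w, u, q)\<close> solves GePUP-E, the divergence of the momentum equation together with
  the pressure Poisson equation shows that \<open>div w\<close> solves the heat equation
  \<open>\<partial>\<^sub>t (div w) = \<nu> \<Delta> (div w)\<close>. It vanishes on the boundary and initially (where \<open>w = u\<close>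
  is divergence free), so \<open>div w = 0\<close> by the maximum principle. On the boundary the normal
  component of the momentum equation and the pressure boundary condition give
  \<open>\<partial>\<^sub>t (n \<bullet> w) = - lam (n \<bullet> w)\<close>, hence \<open>n \<bullet> w = 0\<close>. The potential \<open>phi\<close> of the
  Leray--Helmholtz projection is thus harmonic with zero Neumann data, and Hopf's lemma with the
  strong maximum principle forces \<open>\<nabla>phi = 0\<close>, i.e. \<open>w = u\<close>; the tangential condition on \<open>w\<close>
  and \<open>u \<bullet> n = 0\<close> then give the no-slip condition. Conversely, if \<open>(u, p)\<close> solves the
  Navier--Stokes equations then \<open>(u, u, p)\<close> solves GePUP-E: the divergence of the momentum equation is the pressure Poisson
  equation, and its trace on the boundary, where \<open>u\<close> and \<open>\<partial>\<^sub>t u\<close> vanish, is the pressure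
  boundary condition.\<close>

section \<open>Smooth functions and directional derivatives\<close>

text \<open>Directional derivatives with the point as last argument, so that \<open>pd F a\<close> is again a
  field and can be differentiated further; the domain may be space-time \<open>real \<times> 'a\<close>.\<close>

definition pd :: "('c::real_normed_vector \<Rightarrow> 'b::real_normed_vector) \<Rightarrow> 'c \<Rightarrow> 'c \<Rightarrow> 'b" where
  "pd F a p = frechet_derivative F (at p) a"

lemma pd_eq_frechet_derivative: "pd F a = (\<lambda>p. frechet_derivative F (at p) a)"
  by (simp add: pd_def fun_eq_iff)

lemma dirD_eq_pd: "dirD f x h = pd f h x"
  by (simp add: dirD_def pd_def)

lemma Ck_Suc_pd [simp]:
  "Ck (Suc k) V f \<longleftrightarrow> (\<forall>x\<in>V. f differentiable (at x)) \<and> (\<forall>i\<in>Basis. Ck k V (pd f i))"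
  by (simp add: pd_eq_frechet_derivative)

declare Ck.simps(2) [simp del]

lemma smooth_on_set_Ck: "smooth_on_set V f \<Longrightarrow> Ck k V f"
  by (simp add: smooth_on_set_def)

lemma smooth_on_set_differentiable: "smooth_on_set V f \<Longrightarrow> x \<in> V \<Longrightarrow> f differentiable (at x)"
  using smooth_on_set_Ck[of V f 1] by simp

lemma smooth_on_set_continuous_on: "smooth_on_set V f \<Longrightarrow> continuous_on V f"
  using smooth_on_set_Ck[of V f 0] by simp

lemma smooth_on_set_pd_Basis: "smooth_on_set V f \<Longrightarrow> i \<in> Basis \<Longrightarrow> smooth_on_set V (pd f i)"
  unfolding smooth_on_set_def by (metis Ck_Suc_pd)

lemma Ck_subset: "V' \<subseteq> V \<Longrightarrow> Ck k V f \<Longrightarrow> Ck k V' f"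
  by (induction k arbitrary: f) (auto intro: continuous_on_subset)

lemma smooth_on_set_subset: "V' \<subseteq> V \<Longrightarrow> smooth_on_set V f \<Longrightarrow> smooth_on_set V' f"
  unfolding smooth_on_set_def using Ck_subset by blast

lemma pd_eq_has_derivative: "(F has_derivative F') (at p) \<Longrightarrow> pd F a p = F' a"
  unfolding pd_def using frechet_derivative_at by metis

lemma pd_cong:
  assumes "open S" "p \<in> S" "\<And>y. y \<in> S \<Longrightarrow> F y = G y" "G differentiable (at p)"
  shows "pd F a p = pd G a p"
proof -
  have "frechet_derivative G (at p) = frechet_derivative F (at p)"
    by (rule frechet_derivative_transform_within_open) (use assms in auto)
  then show ?thesis by (simp add: pd_def)
qed

lemma differentiable_cong:
  "open S \<Longrightarrow> p \<in> S \<Longrightarrow> (\<And>y. y \<in> S \<Longrightarrow> F y = G y) \<Longrightarrow> G differentiable (at p) \<Longrightarrow> F differentiable (at p)"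
  unfolding differentiable_def using has_derivative_transform_within_open[of G _ p UNIV S F] by auto

lemma Ck_cong: "open V \<Longrightarrow> (\<And>x. x \<in> V \<Longrightarrow> f x = g x) \<Longrightarrow> Ck k V f \<Longrightarrow> Ck k V g"
proof (induction k arbitrary: f g)
  case 0
  then show ?case by (metis Ck.simps(1) continuous_on_cong)
next
  case (Suc k)
  have f: "\<forall>x\<in>V. f differentiable (at x)" "\<forall>i\<in>Basis. Ck k V (pd f i)"
    using Suc.prems(3) by auto
  have "g differentiable (at x)" if "x \<in> V" for x
    using Suc.prems f that by (intro differentiable_cong[of V x g f]) auto
  moreover have "Ck k V (pd g i)" if "i \<in> Basis" for i
  proof (rule Suc.IH[OF Suc.prems(1) _ f(2)[rule_format, OF that]])
    show "pd f i x = pd g i x" if "x \<in> V" for x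
    proof -
      have "pd g i x = pd f i x"
        by (rule pd_cong[OF Suc.prems(1) that]) (use Suc.prems(2) f(1) that in auto)
      then show ?thesis by simp
    qed
  qed
  ultimately show ?case by simp
qed

lemma smooth_on_set_cong:
  "open V \<Longrightarrow> (\<And>x. x \<in> V \<Longrightarrow> f x = g x) \<Longrightarrow> smooth_on_set V f \<Longrightarrow> smooth_on_set V g"
  unfolding smooth_on_set_def using Ck_cong by blast

lemma pd_bounded_linear:
  "bounded_linear L \<Longrightarrow> F differentiable (at p) \<Longrightarrow> pd (\<lambda>q. L (F q)) a p = L (pd F a p)"
  by (rule pd_eq_has_derivative, rule bounded_linear.has_derivative) (auto simp: frechet_derivative_works pd_def)

lemma differentiable_bounded_linear:
  "bounded_linear L \<Longrightarrow> F differentiable (at p) \<Longrightarrow> (\<lambda>q. L (F q)) differentiable (at p)"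
  unfolding differentiable_def using bounded_linear.has_derivative by blast

lemma pd_add:
  "F differentiable (at p) \<Longrightarrow> G differentiable (at p) \<Longrightarrow> pd (\<lambda>q. F q + G q) a p = pd F a p + pd G a p"
  by (rule pd_eq_has_derivative, rule has_derivative_add) (auto simp: frechet_derivative_works pd_def)

lemma pd_diff:
  "F differentiable (at p) \<Longrightarrow> G differentiable (at p) \<Longrightarrow> pd (\<lambda>q. F q - G q) a p = pd F a p - pd G a p"
  by (rule pd_eq_has_derivative, rule has_derivative_diff) (auto simp: frechet_derivative_works pd_def)

lemma pd_sum:
  "finite I \<Longrightarrow> (\<And>i. i \<in> I \<Longrightarrow> F i differentiable (at p)) \<Longrightarrow>
   pd (\<lambda>q. \<Sum>i\<in>I. F i q) a p = (\<Sum>i\<in>I. pd (F i) a p)"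
  by (rule pd_eq_has_derivative, rule has_derivative_sum) (auto simp: frechet_derivative_works pd_def)

lemma pd_scaleR: "F differentiable (at p) \<Longrightarrow> pd (\<lambda>q. c *\<^sub>R F q) a p = c *\<^sub>R pd F a p"
  using pd_bounded_linear[OF bounded_linear_scaleR_right] .

lemma pd_scaleR_left:
  "(F :: _ \<Rightarrow> real) differentiable (at p) \<Longrightarrow> pd (\<lambda>q. F q *\<^sub>R c) a p = pd F a p *\<^sub>R c"
  using pd_bounded_linear[OF bounded_linear_scaleR_left] .

lemma pd_inner_left: "F differentiable (at p) \<Longrightarrow> pd (\<lambda>q. F q \<bullet> c) a p = pd F a p \<bullet> c"
  using pd_bounded_linear[OF bounded_linear_inner_left] .

lemma pd_minus: "F differentiable (at p) \<Longrightarrow> pd (\<lambda>q. - F q) a p = - pd F a p"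
  using pd_scaleR[of F p "-1" a] by simp

lemma linear_pd: "F differentiable (at p) \<Longrightarrow> linear (\<lambda>a. pd F a p)"
  unfolding pd_def using linear_frechet_derivative by metis

lemma pd_scaleR_dir: "F differentiable (at p) \<Longrightarrow> pd F (c *\<^sub>R a) p = c *\<^sub>R pd F a p"
  using linear_pd linear_scale by blast

lemma pd_zero_dir: "F differentiable (at p) \<Longrightarrow> pd F 0 p = 0"
  using linear_pd linear_0 by blast

lemma pd_euclidean_expansion:
  "F differentiable (at p) \<Longrightarrow> pd F h p = (\<Sum>i\<in>Basis. (h \<bullet> i) *\<^sub>R pd F i p)"
proof -
  assume "F differentiable (at p)"
  then have "linear (frechet_derivative F (at p))" by (rule linear_frechet_derivative)
  moreover have "pd F h p = frechet_derivative F (at p) (\<Sum>i\<in>Basis. (h \<bullet> i) *\<^sub>R i)"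
    by (simp add: pd_def euclidean_representation)
  ultimately show ?thesis by (simp add: linear_sum linear_scale pd_def)
qed

lemma Ck_bounded_linear: "open V \<Longrightarrow> bounded_linear L \<Longrightarrow> Ck k V f \<Longrightarrow> Ck k V (\<lambda>x. L (f x))"
proof (induction k arbitrary: f)
  case 0
  then show ?case using bounded_linear.continuous_on[of L V f] by simp
next
  case (Suc k)
  have "Ck k V (pd (\<lambda>x. L (f x)) i)" if "i \<in> Basis" for i
  proof (rule Ck_cong[OF Suc.prems(1), of "\<lambda>x. L (pd f i x)"])
    show "L (pd f i x) = pd (\<lambda>x. L (f x)) i x" if "x \<in> V" for x
      using Suc.prems that by (simp add: pd_bounded_linear)
    show "Ck k V (\<lambda>x. L (pd f i x))"
      using Suc.IH[OF Suc.prems(1,2)] Suc.prems that by simp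
  qed
  with Suc.prems show ?case by (simp add: differentiable_bounded_linear)
qed

lemma Ck_add: "open V \<Longrightarrow> Ck k V f \<Longrightarrow> Ck k V g \<Longrightarrow> Ck k V (\<lambda>x. f x + g x)"
proof (induction k arbitrary: f g)
  case 0
  then show ?case by (simp add: continuous_on_add)
next
  case (Suc k)
  have "Ck k V (pd (\<lambda>x. f x + g x) i)" if "i \<in> Basis" for i
  proof (rule Ck_cong[OF Suc.prems(1), of "\<lambda>x. pd f i x + pd g i x"])
    show "pd f i x + pd g i x = pd (\<lambda>x. f x + g x) i x" if "x \<in> V" for x
      using Suc.prems that by (simp add: pd_add)
    show "Ck k V (\<lambda>x. pd f i x + pd g i x)"
      using Suc.IH[OF Suc.prems(1)] Suc.prems that by simp
  qed
  with Suc.prems show ?case by simp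
qed

lemma pd_const [simp]: "pd (\<lambda>q. c) a = (\<lambda>p. 0)"
  by (simp add: pd_def fun_eq_iff)

lemma Ck_const: "Ck k V (\<lambda>x. c)"
  by (induction k arbitrary: c) auto

lemma smooth_on_set_const: "smooth_on_set V (\<lambda>x. c)"
  unfolding smooth_on_set_def using Ck_const by blast

lemma smooth_on_set_bounded_linear:
  "open V \<Longrightarrow> bounded_linear L \<Longrightarrow> smooth_on_set V f \<Longrightarrow> smooth_on_set V (\<lambda>x. L (f x))"
  unfolding smooth_on_set_def using Ck_bounded_linear by blast

lemma smooth_on_set_add:
  "open V \<Longrightarrow> smooth_on_set V f \<Longrightarrow> smooth_on_set V g \<Longrightarrow> smooth_on_set V (\<lambda>x. f x + g x)"
  unfolding smooth_on_set_def using Ck_add by blast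

lemma smooth_on_set_sum:
  assumes "open V" shows "finite I \<Longrightarrow> (\<And>i. i \<in> I \<Longrightarrow> smooth_on_set V (f i)) \<Longrightarrow>
   smooth_on_set V (\<lambda>x. \<Sum>i\<in>I. f i x)"
  by (induction I rule: finite_induct) (simp_all add: smooth_on_set_const smooth_on_set_add assms)

lemma smooth_on_set_scaleR: "open V \<Longrightarrow> smooth_on_set V f \<Longrightarrow> smooth_on_set V (\<lambda>x. c *\<^sub>R f x)"
  by (rule smooth_on_set_bounded_linear[OF _ bounded_linear_scaleR_right])

lemma smooth_on_set_inner_left: "open V \<Longrightarrow> smooth_on_set V f \<Longrightarrow> smooth_on_set V (\<lambda>x. f x \<bullet> c)"
  by (rule smooth_on_set_bounded_linear[OF _ bounded_linear_inner_left])

lemma smooth_on_set_minus: "open V \<Longrightarrow> smooth_on_set V f \<Longrightarrow> smooth_on_set V (\<lambda>x. - f x)"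
  by (rule smooth_on_set_bounded_linear[OF _ bounded_linear_minus[OF bounded_linear_ident]])

lemma smooth_on_set_pd: "open V \<Longrightarrow> smooth_on_set V f \<Longrightarrow> smooth_on_set V (pd f h)"
proof -
  assume V: "open V" and f: "smooth_on_set V f"
  have "smooth_on_set V (\<lambda>x. \<Sum>i\<in>Basis. (h \<bullet> i) *\<^sub>R pd f i x)"
    by (intro smooth_on_set_sum smooth_on_set_scaleR smooth_on_set_pd_Basis V f) auto
  then show ?thesis
    by (rule smooth_on_set_cong[OF V, rotated])
       (simp add: pd_euclidean_expansion[symmetric] smooth_on_set_differentiable[OF f])
qed

lemma smooth_on_set_pd_differentiable:
  "open V \<Longrightarrow> smooth_on_set V F \<Longrightarrow> p \<in> V \<Longrightarrow> pd F a differentiable (at p)"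
  using smooth_on_set_differentiable smooth_on_set_pd by blast

lemma pd_cong_smooth:
  "open S \<Longrightarrow> smooth_on_set S G \<Longrightarrow> (\<And>y. y \<in> S \<Longrightarrow> F y = G y) \<Longrightarrow> p \<in> S \<Longrightarrow> pd F a p = pd G a p"
  using pd_cong smooth_on_set_differentiable by metis

lemma has_vector_derivative_line:
  "F differentiable (at (x + s *\<^sub>R h)) \<Longrightarrow>
   ((\<lambda>r. F (x + r *\<^sub>R h)) has_vector_derivative pd F h (x + s *\<^sub>R h)) (at s)"
proof -
  assume F: "F differentiable (at (x + s *\<^sub>R h))"
  have "((\<lambda>r. x + r *\<^sub>R h) has_derivative (\<lambda>r. r *\<^sub>R h)) (at s)"
    by (auto intro!: derivative_eq_intros)
  from has_derivative_compose[OF this F[unfolded frechet_derivative_works]]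
  show ?thesis
    unfolding has_vector_derivative_def using pd_scaleR_dir[OF F] by (simp add: pd_def)
qed

lemma has_real_derivative_line:
  "(F :: _ \<Rightarrow> real) differentiable (at (x + s *\<^sub>R h)) \<Longrightarrow>
   ((\<lambda>r. F (x + r *\<^sub>R h)) has_real_derivative pd F h (x + s *\<^sub>R h)) (at s)"
  using has_vector_derivative_line has_real_derivative_iff_has_vector_derivative by blast

lemma second_difference_mean_value:
  fixes f :: "'c::euclidean_space \<Rightarrow> real"
  assumes V: "open V" and f: "smooth_on_set V f" and ball: "ball x \<delta> \<subseteq> V"
    and h: "0 < h" "h * (norm a + norm b) < \<delta>"
  obtains p where "p \<in> cball x (h * (norm a + norm b))"
    "f (x + h *\<^sub>R a + h *\<^sub>R b) - f (x + h *\<^sub>R a) - f (x + h *\<^sub>R b) + f x = h * h * pd (pd f a) b p"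
proof -
  have near: "x + s *\<^sub>R a + r *\<^sub>R b \<in> cball x (h * (norm a + norm b))"
    if "0 \<le> s" "s \<le> h" "0 \<le> r" "r \<le> h" for s r
  proof -
    have "norm (s *\<^sub>R a + r *\<^sub>R b) \<le> s * norm a + r * norm b"
      using norm_triangle_ineq[of "s *\<^sub>R a" "r *\<^sub>R b"] that by simp
    also have "\<dots> \<le> h * norm a + h * norm b"
      using that by (intro add_mono mult_right_mono) auto
    moreover have "dist x (x + s *\<^sub>R a + r *\<^sub>R b) = norm (s *\<^sub>R a + r *\<^sub>R b)"
      by (metis add.assoc add_diff_cancel_left' dist_commute dist_norm)
    ultimately show ?thesis by (simp add: algebra_simps)
  qed
  have inV: "x + s *\<^sub>R a + r *\<^sub>R b \<in> V" if "0 \<le> s" "s \<le> h" "0 \<le> r" "r \<le> h" for s r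
    using near[OF that] h ball by (auto simp: dist_commute)
  define g where "g s = f (x + h *\<^sub>R b + s *\<^sub>R a) - f (x + s *\<^sub>R a)" for s
  define g' where "g' s = pd f a (x + h *\<^sub>R b + s *\<^sub>R a) - pd f a (x + s *\<^sub>R a)" for s
  have "(g has_real_derivative g' s) (at s)" if "0 \<le> s" "s \<le> h" for s
    unfolding g_def g'_def
    using smooth_on_set_differentiable[OF f inV[of s h]] smooth_on_set_differentiable[OF f inV[of s 0]] that h
    by (intro DERIV_diff has_real_derivative_line) (simp_all add: algebra_simps)
  then obtain \<xi> where \<xi>: "0 < \<xi>" "\<xi> < h" "g h - g 0 = h * g' \<xi>"
    using MVT2[of 0 h g g'] h by auto
  define k where "k r = pd f a (x + \<xi> *\<^sub>R a + r *\<^sub>R b)" for r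
  have "(k has_real_derivative pd (pd f a) b (x + \<xi> *\<^sub>R a + r *\<^sub>R b)) (at r)" if "0 \<le> r" "r \<le> h" for r
    unfolding k_def using that \<xi>
    by (intro has_real_derivative_line smooth_on_set_pd_differentiable[OF V f inV]) auto
  then obtain \<eta> where \<eta>: "0 < \<eta>" "\<eta> < h" "k h - k 0 = h * pd (pd f a) b (x + \<xi> *\<^sub>R a + \<eta> *\<^sub>R b)"
    using MVT2[of 0 h k "\<lambda>r. pd (pd f a) b (x + \<xi> *\<^sub>R a + r *\<^sub>R b)"] h by auto
  have "g' \<xi> = k h - k 0" unfolding g'_def k_def by (simp add: algebra_simps)
  moreover have "g h - g 0 = f (x + h *\<^sub>R a + h *\<^sub>R b) - f (x + h *\<^sub>R a) - f (x + h *\<^sub>R b) + f x"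
    unfolding g_def by (simp add: algebra_simps)
  ultimately have "f (x + h *\<^sub>R a + h *\<^sub>R b) - f (x + h *\<^sub>R a) - f (x + h *\<^sub>R b) + f x =
      h * h * pd (pd f a) b (x + \<xi> *\<^sub>R a + \<eta> *\<^sub>R b)"
    using \<xi>(3) \<eta>(3) by (simp only: mult.assoc)
  moreover have "x + \<xi> *\<^sub>R a + \<eta> *\<^sub>R b \<in> cball x (h * (norm a + norm b))"
    using \<xi> \<eta> by (intro near) auto
  ultimately show ?thesis by (rule that[rotated])
qed

lemma pd_commute_real:
  fixes f :: "'c::euclidean_space \<Rightarrow> real"
  assumes V: "open V" and f: "smooth_on_set V f" and x: "x \<in> V"
  shows "pd (pd f a) b x = pd (pd f b) a x"
proof (rule ccontr)
  let ?F1 = "pd (pd f a) b" and ?F2 = "pd (pd f b) a"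
  assume ne: "?F1 x \<noteq> ?F2 x"
  define e where "e = \<bar>?F1 x - ?F2 x\<bar> / 2"
  have e: "e > 0" using ne by (simp add: e_def)
  have "continuous_on V ?F1" "continuous_on V ?F2"
    by (intro smooth_on_set_continuous_on smooth_on_set_pd V f)+
  then obtain \<rho>1 \<rho>2 where \<rho>: "\<rho>1 > 0" "\<forall>y\<in>V. dist y x < \<rho>1 \<longrightarrow> dist (?F1 y) (?F1 x) < e"
    "\<rho>2 > 0" "\<forall>y\<in>V. dist y x < \<rho>2 \<longrightarrow> dist (?F2 y) (?F2 x) < e"
    using x e unfolding continuous_on_iff by blast
  obtain \<delta> where \<delta>: "\<delta> > 0" "ball x \<delta> \<subseteq> V" using V x open_contains_ball by blast
  define m where "m = min \<delta> (min \<rho>1 \<rho>2)"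
  have m: "m > 0" "m \<le> \<delta>" "m \<le> \<rho>1" "m \<le> \<rho>2" using \<delta> \<rho> by (auto simp: m_def)
  define h where "h = m / (2 * (norm a + norm b + 1))"
  have np: "norm a + norm b + 1 > 0" by (simp add: add_nonneg_pos)
  have h: "h > 0" "h * (norm a + norm b) < m"
  proof -
    show "h > 0" using m np by (simp add: h_def)
    have "h * (norm a + norm b) \<le> h * (norm a + norm b + 1)" using \<open>h > 0\<close> by simp
    also have "\<dots> = m / 2" unfolding h_def using np by (simp add: field_simps)
    finally show "h * (norm a + norm b) < m" using m by simp
  qed
  obtain p1 where p1: "p1 \<in> cball x (h * (norm a + norm b))"
    "f (x + h *\<^sub>R a + h *\<^sub>R b) - f (x + h *\<^sub>R a) - f (x + h *\<^sub>R b) + f x = h * h * ?F1 p1"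
    using second_difference_mean_value[OF V f \<delta>(2) h(1), of a b] h m by auto
  obtain p2 where p2: "p2 \<in> cball x (h * (norm a + norm b))"
    "f (x + h *\<^sub>R b + h *\<^sub>R a) - f (x + h *\<^sub>R b) - f (x + h *\<^sub>R a) + f x = h * h * ?F2 p2"
    using second_difference_mean_value[OF V f \<delta>(2) h(1), of b a] h m by (auto simp: add.commute)
  have eq: "?F1 p1 = ?F2 p2" using p1(2) p2(2) h(1) by (simp add: algebra_simps)
  have "dist p1 x < m" "dist p2 x < m" using p1(1) p2(1) h by (auto simp: dist_commute add.commute)
  moreover from this have "p1 \<in> V" "p2 \<in> V" using \<delta>(2) m by (auto simp: dist_commute)
  ultimately have "dist (?F1 p1) (?F1 x) < e" "dist (?F2 p2) (?F2 x) < e"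
    using \<rho> m by auto
  with eq show False unfolding e_def dist_real_def by argo
qed

lemma pd_commute:
  fixes F :: "'c::euclidean_space \<Rightarrow> 'b::euclidean_space"
  assumes V: "open V" and F: "smooth_on_set V F" and x: "x \<in> V"
  shows "pd (pd F a) b x = pd (pd F b) a x"
proof (rule euclidean_eqI)
  fix e :: 'b assume "e \<in> Basis"
  have component: "pd (pd F a) b x \<bullet> e = pd (pd (\<lambda>q. F q \<bullet> e) a) b x" for a b
  proof -
    have Fa: "smooth_on_set V (pd F a)" by (rule smooth_on_set_pd[OF V F])
    have "pd (pd F a) b x \<bullet> e = pd (\<lambda>p. pd F a p \<bullet> e) b x"
      by (rule pd_inner_left[symmetric, OF smooth_on_set_differentiable[OF Fa x]])
    also have "\<dots> = pd (pd (\<lambda>q. F q \<bullet> e) a) b x"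
      by (rule pd_cong_smooth[OF V smooth_on_set_inner_left[OF V Fa] _ x, symmetric])
         (simp add: pd_inner_left smooth_on_set_differentiable[OF F])
    finally show ?thesis .
  qed
  show "pd (pd F a) b x \<bullet> e = pd (pd F b) a x \<bullet> e"
    unfolding component using pd_commute_real[OF V smooth_on_set_inner_left[OF V F] x] .
qed

section \<open>Space-time fields\<close>

lemma open_slice: "open V \<Longrightarrow> open {y. (t, y) \<in> V}"
proof -
  assume "open V"
  moreover have "continuous_on UNIV (Pair t)" by (intro continuous_intros)
  ultimately have "open (Pair t -` V)" using open_vimage by blast
  then show ?thesis by (simp add: vimage_def)
qed

lemma slice_has_derivative:
  "F differentiable (at (t, x)) \<Longrightarrow> ((\<lambda>y. F (t, y)) has_derivative (\<lambda>h. pd F (0, h) (t, x))) (at x)"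
proof -
  assume F: "F differentiable (at (t, x))"
  have "((\<lambda>y. (t, y)) has_derivative (\<lambda>h. (0, h))) (at x)"
    by (auto intro!: derivative_eq_intros)
  from has_derivative_compose[OF this F[unfolded frechet_derivative_works]]
  show ?thesis by (simp add: pd_def)
qed

lemma slice_differentiable: "F differentiable (at (t, x)) \<Longrightarrow> (\<lambda>y. F (t, y)) differentiable (at x)"
  using slice_has_derivative unfolding differentiable_def by blast

lemma pd_slice: "F differentiable (at (t, x)) \<Longrightarrow> pd (\<lambda>y. F (t, y)) h x = pd F (0, h) (t, x)"
  using slice_has_derivative pd_eq_has_derivative by blast

lemma has_vector_derivative_time:
  "F differentiable (at (t, x)) \<Longrightarrow> ((\<lambda>s. F (s, x)) has_vector_derivative pd F (1, 0) (t, x)) (at t)"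
proof -
  assume F: "F differentiable (at (t, x))"
  have "((\<lambda>s. (s, x)) has_derivative (\<lambda>s. (s, 0))) (at t)"
    by (auto intro!: derivative_eq_intros)
  from has_derivative_compose[OF this F[unfolded frechet_derivative_works]]
  have "((\<lambda>s. F (s, x)) has_derivative (\<lambda>s. pd F (s, 0) (t, x))) (at t)"
    by (simp add: pd_def)
  moreover have "(\<lambda>s. pd F (s, 0) (t, x)) = (\<lambda>s. s *\<^sub>R pd F (1, 0) (t, x))"
  proof
    fix s
    have "pd F (s, 0) (t, x) = pd F (s *\<^sub>R (1, 0)) (t, x)" by simp
    then show "pd F (s, 0) (t, x) = s *\<^sub>R pd F (1, 0) (t, x)" by (simp only: pd_scaleR_dir[OF F])
  qed
  ultimately show ?thesis unfolding has_vector_derivative_def by (simp only:)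
qed

lemma has_real_derivative_time:
  "(F :: real \<times> 'a::real_normed_vector \<Rightarrow> real) differentiable (at (t, x)) \<Longrightarrow>
   ((\<lambda>s. F (s, x)) has_real_derivative pd F (1, 0) (t, x)) (at t)"
  using has_vector_derivative_time has_real_derivative_iff_has_vector_derivative by blast

lemma dt_eq_pd:
  fixes F :: "real \<times> 'a::real_normed_vector \<Rightarrow> 'b::euclidean_space"
  shows "t0 < T \<Longrightarrow> t \<in> {t0..T} \<Longrightarrow> F differentiable (at (t, x)) \<Longrightarrow>
   dt t0 T (\<lambda>s y. F (s, y)) t x = pd F (1, 0) (t, x)"
proof -
  assume "t0 < T" "t \<in> {t0..T}" and F: "F differentiable (at (t, x))"
  moreover have "((\<lambda>s. F (s, x)) has_vector_derivative pd F (1, 0) (t, x)) (at t within {t0..T})"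
    by (rule has_vector_derivative_at_within, rule has_vector_derivative_time[OF F])
  ultimately show ?thesis
    unfolding dt_def using vector_derivative_within_closed_interval by blast
qed

lemma dt_eq_zero:
  fixes w :: "real \<Rightarrow> 'a \<Rightarrow> 'b::euclidean_space"
  assumes "t0 < T" "t \<in> {t0..T}" "\<And>s. s \<in> {t0..T} \<Longrightarrow> w s x = 0"
  shows "dt t0 T w t x = 0"
proof -
  have "((\<lambda>s. w s x) has_vector_derivative 0) (at t within {t0..T})"
    by (rule has_vector_derivative_transform[OF assms(2) _ has_vector_derivative_const])
       (use assms(3) in auto)
  then show ?thesis
    unfolding dt_def by (rule vector_derivative_within_closed_interval[OF assms(1,2)])
qed

lemma pd_pair_expansion:
  fixes F :: "real \<times> 'a::euclidean_space \<Rightarrow> 'b::real_normed_vector"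
  assumes F: "F differentiable (at (t, x))"
  shows "pd F (0, h) (t, x) = (\<Sum>i\<in>Basis. (h \<bullet> i) *\<^sub>R pd F (0, i) (t, x))"
  using pd_euclidean_expansion[OF slice_differentiable[OF F], of h] by (simp add: pd_slice[OF F])

definition spatial_div :: "(real \<times> 'a::euclidean_space \<Rightarrow> 'a) \<Rightarrow> real \<times> 'a \<Rightarrow> real" where
  "spatial_div W p = (\<Sum>j\<in>Basis. pd W (0, j) p \<bullet> j)"

definition spatial_lap ::
  "(real \<times> 'a::euclidean_space \<Rightarrow> 'b::real_normed_vector) \<Rightarrow> real \<times> 'a \<Rightarrow> 'b" where
  "spatial_lap W p = (\<Sum>i\<in>Basis. pd (pd W (0, i)) (0, i) p)"

lemma divg_slice: "H differentiable (at (t, x)) \<Longrightarrow> divg (\<lambda>y. H (t, y)) x = spatial_div H (t, x)"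
  unfolding divg_def spatial_div_def by (simp add: dirD_eq_pd pd_slice)

lemma grad_slice:
  "H differentiable (at (t, x)) \<Longrightarrow> grad (\<lambda>y. H (t, y)) x = (\<Sum>i\<in>Basis. pd H (0, i) (t, x) *\<^sub>R i)"
  unfolding grad_def by (simp add: dirD_eq_pd pd_slice)

lemma conv_slice:
  fixes H :: "real \<times> 'a::euclidean_space \<Rightarrow> 'b::real_normed_vector"
  assumes "H differentiable (at (t, x))"
  shows "conv v (\<lambda>y. H (t, y)) x = (\<Sum>i\<in>Basis. (v x \<bullet> i) *\<^sub>R pd H (0, i) (t, x))"
  unfolding conv_def dirD_eq_pd pd_slice[OF assms] by (rule pd_pair_expansion[OF assms])

context
  fixes V :: "(real \<times> 'a::euclidean_space) set" and H :: "real \<times> 'a \<Rightarrow> 'b::euclidean_space"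
  assumes V: "open V" and H: "smooth_on_set V H"
begin

lemma pd_slice_differentiable: "(t, x) \<in> V \<Longrightarrow> (\<lambda>y. pd (\<lambda>y. H (t, y)) h y) differentiable (at x)"
proof -
  assume p: "(t, x) \<in> V"
  have "(\<lambda>y. pd H (0, h) (t, y)) differentiable (at x)"
    by (rule slice_differentiable, rule smooth_on_set_pd_differentiable[OF V H p])
  then show ?thesis
  proof (rule differentiable_cong[OF open_slice[OF V, of t], rotated 2])
    show "x \<in> {y. (t, y) \<in> V}" using p by simp
    show "pd (\<lambda>y. H (t, y)) h y = pd H (0, h) (t, y)" if "y \<in> {y. (t, y) \<in> V}" for y
      using that by (simp add: pd_slice smooth_on_set_differentiable[OF H])
  qed
qed

lemma lap_slice: "(t, x) \<in> V \<Longrightarrow> lap (\<lambda>y. H (t, y)) x = spatial_lap H (t, x)"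
proof -
  assume p: "(t, x) \<in> V"
  have "pd (\<lambda>y. pd (\<lambda>y. H (t, y)) i y) i x = pd (\<lambda>y. pd H (0, i) (t, y)) i x" for i
    by (rule pd_cong[OF open_slice[OF V, of t]])
       (use p in \<open>auto simp: pd_slice smooth_on_set_differentiable[OF H]
          intro: slice_differentiable smooth_on_set_pd_differentiable[OF V H]\<close>)
  then show ?thesis
    unfolding lap_def spatial_lap_def
    by (simp add: dirD_eq_pd pd_slice smooth_on_set_pd_differentiable[OF V H p])
qed

end

lemma smooth_on_set_spatial_div: "open V \<Longrightarrow> smooth_on_set V W \<Longrightarrow> smooth_on_set V (spatial_div W)"
  unfolding spatial_div_def[abs_def]
  by (intro smooth_on_set_sum smooth_on_set_inner_left smooth_on_set_pd) auto

lemma smooth_on_set_spatial_lap: "open V \<Longrightarrow> smooth_on_set V W \<Longrightarrow> smooth_on_set V (spatial_lap W)"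
  unfolding spatial_lap_def[abs_def]
  by (intro smooth_on_set_sum smooth_on_set_pd) auto

lemma spatial_div_sum:
  "finite I \<Longrightarrow> (\<And>i. i \<in> I \<Longrightarrow> F i differentiable (at p)) \<Longrightarrow>
   spatial_div (\<lambda>q. \<Sum>i\<in>I. F i q) p = (\<Sum>i\<in>I. spatial_div (F i) p)"
  unfolding spatial_div_def by (simp add: pd_sum inner_sum_left) (rule sum.swap)

lemma pd_spatial_div:
  assumes V: "open V" and W: "smooth_on_set V W" and p: "p \<in> V"
  shows "pd (spatial_div W) a p = spatial_div (pd W a) p"
proof -
  have "pd (spatial_div W) a p = (\<Sum>j\<in>Basis. pd (pd W (0, j)) a p \<bullet> j)"
    unfolding spatial_div_def[abs_def]
    by (simp add: pd_sum pd_inner_left smooth_on_set_pd_differentiable[OF V W p]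
        differentiable_bounded_linear[OF bounded_linear_inner_left])
  then show ?thesis
    unfolding spatial_div_def by (simp add: pd_commute[OF V W p])
qed

lemma spatial_lap_spatial_div:
  assumes V: "open V" and W: "smooth_on_set V W" and p: "p \<in> V"
  shows "spatial_lap (spatial_div W) p = spatial_div (spatial_lap W) p"
proof -
  have "pd (pd (spatial_div W) (0, i)) (0, i) p = spatial_div (pd (pd W (0, i)) (0, i)) p" for i
  proof -
    have "pd (pd (spatial_div W) (0, i)) (0, i) p = pd (spatial_div (pd W (0, i))) (0, i) p"
      by (rule pd_cong_smooth[OF V smooth_on_set_spatial_div[OF V smooth_on_set_pd[OF V W]] _ p])
         (rule pd_spatial_div[OF V W])
    also have "\<dots> = spatial_div (pd (pd W (0, i)) (0, i)) p"
      by (rule pd_spatial_div[OF V smooth_on_set_pd[OF V W] p])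
    finally show ?thesis .
  qed
  then show ?thesis
    unfolding spatial_lap_def[of "spatial_div W"] spatial_lap_def[of W, abs_def]
    by (simp add: spatial_div_sum smooth_on_set_pd_differentiable[OF V smooth_on_set_pd[OF V W] p])
qed

lemma divg_add:
  "f differentiable (at x) \<Longrightarrow> g differentiable (at x) \<Longrightarrow> divg (\<lambda>y. f y + g y) x = divg f x + divg g x"
  unfolding divg_def by (simp add: dirD_eq_pd pd_add inner_add_left sum.distrib)

lemma divg_diff:
  "f differentiable (at x) \<Longrightarrow> g differentiable (at x) \<Longrightarrow> divg (\<lambda>y. f y - g y) x = divg f x - divg g x"
  unfolding divg_def by (simp add: dirD_eq_pd pd_diff inner_diff_left sum_subtractf)

lemma divg_scaleR: "f differentiable (at x) \<Longrightarrow> divg (\<lambda>y. c *\<^sub>R f y) x = c * divg f x"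
  unfolding divg_def by (simp add: dirD_eq_pd pd_scaleR sum_distrib_left)

lemma divg_cong:
  "open S \<Longrightarrow> x \<in> S \<Longrightarrow> (\<And>y. y \<in> S \<Longrightarrow> f y = g y) \<Longrightarrow> g differentiable (at x) \<Longrightarrow> divg f x = divg g x"
  unfolding divg_def dirD_eq_pd by (metis (no_types, lifting) pd_cong)

lemma differentiable_grad:
  "(\<And>i. i \<in> Basis \<Longrightarrow> pd f i differentiable (at x)) \<Longrightarrow> grad f differentiable (at x)"
  unfolding grad_def[abs_def] dirD_eq_pd
  by (intro differentiable_sum) (auto intro!: differentiable_scaleR differentiable_const)

lemma divg_grad:
  assumes "\<And>i. i \<in> Basis \<Longrightarrow> pd f i differentiable (at x)"
  shows "divg (grad f) x = lap f x"
proof -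
  have "pd (grad f) j x = (\<Sum>i\<in>Basis. pd (pd f i) j x *\<^sub>R i)" for j
    unfolding grad_def[abs_def] dirD_eq_pd
    by (simp add: pd_sum pd_scaleR_left assms differentiable_scaleR)
  then show ?thesis
    unfolding divg_def lap_def dirD_eq_pd
    by (simp add: inner_sum_left inner_Basis if_distrib sum.delta cong: if_cong)
qed

lemma lap_eq_pd: "lap f x = (\<Sum>i\<in>Basis. pd (pd f i) i x)"
  by (simp add: lap_def dirD_eq_pd pd_eq_frechet_derivative[symmetric])

lemma lap_const [simp]: "lap (\<lambda>y. c) x = 0"
  by (simp add: lap_eq_pd)

lemma grad_const [simp]: "grad (\<lambda>y. c) x = 0"
  by (simp add: grad_def dirD_eq_pd)

lemma lap_cong:
  assumes "open S" "x \<in> S" "\<And>y. y \<in> S \<Longrightarrow> f y = g y" "\<And>y. y \<in> S \<Longrightarrow> g differentiable (at y)"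
    "\<And>i. i \<in> Basis \<Longrightarrow> pd g i differentiable (at x)"
  shows "lap f x = lap g x"
proof -
  have "pd (pd f i) i x = pd (pd g i) i x" if "i \<in> Basis" for i
    by (rule pd_cong[OF assms(1,2) _ assms(5)[OF that]]) (rule pd_cong[OF assms(1) _ assms(3,4)])
  then show ?thesis by (simp add: lap_eq_pd)
qed

section \<open>Maximum principles\<close>

lemma DERIV_second_nonpos_at_local_max:
  fixes h h' :: "real \<Rightarrow> real"
  assumes "0 < \<delta>" and h: "\<And>r. \<bar>r\<bar> < \<delta> \<Longrightarrow> (h has_real_derivative h' r) (at r)"
    and h': "(h' has_real_derivative c) (at 0)"
    and max: "\<And>r. \<bar>r\<bar> < \<delta> \<Longrightarrow> h r \<le> h 0"
  shows "c \<le> 0"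
proof (rule ccontr)
  assume "\<not> c \<le> 0"
  have h'0: "h' 0 = 0"
    by (rule DERIV_local_max[OF h[of 0] \<open>0 < \<delta>\<close>]) (use \<open>0 < \<delta>\<close> max in auto)
  obtain e where e: "e > 0" "\<forall>r>0. r < e \<longrightarrow> h' 0 < h' (0 + r)"
    using DERIV_pos_inc_right[OF h'] \<open>\<not> c \<le> 0\<close> by auto
  define r where "r = min e \<delta> / 2"
  have r: "0 < r" "r < e" "r < \<delta>" using e \<open>0 < \<delta>\<close> by (auto simp: r_def)
  obtain z where z: "0 < z" "z < r" "h r - h 0 = (r - 0) * h' z"
    using MVT2[of 0 r h h'] r h by auto
  have "h' z > 0" using e(2) z r h'0 by auto
  then have "r * h' z > 0" using r(1) by simp
  then have "h r > h 0" using z(3) by simp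
  with max[of r] r show False by simp
qed

lemma DERIV_nonpos_at_right_max:
  fixes g :: "real \<Rightarrow> real"
  assumes "(g has_real_derivative D) (at 0)" "0 < c" "\<And>s. 0 < s \<Longrightarrow> s < c \<Longrightarrow> g s \<le> g 0"
  shows "D \<le> 0"
proof (rule ccontr)
  assume "\<not> D \<le> 0"
  then obtain d where d: "d > 0" "\<And>s. s > 0 \<Longrightarrow> s < d \<Longrightarrow> g 0 < g (0 + s)"
    using DERIV_pos_inc_right[OF assms(1)] by force
  define s where "s = min d c / 2"
  have "0 < s" "s < d" "s < c" using d assms(2) by (auto simp: s_def)
  with d(2) assms(3) show False by force
qed

lemma pd2_nonpos_at_line_max:
  fixes phi :: "'c::euclidean_space \<Rightarrow> real"
  assumes V: "open V" and phi: "smooth_on_set V phi" and "0 < \<delta>"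
    and line: "\<And>r. \<bar>r\<bar> < \<delta> \<Longrightarrow> p + r *\<^sub>R a \<in> V"
    and max: "\<And>r. \<bar>r\<bar> < \<delta> \<Longrightarrow> phi (p + r *\<^sub>R a) \<le> phi p"
  shows "pd (pd phi a) a p \<le> 0"
proof (rule DERIV_second_nonpos_at_local_max[OF \<open>0 < \<delta>\<close>, of "\<lambda>r. phi (p + r *\<^sub>R a)" "\<lambda>r. pd phi a (p + r *\<^sub>R a)"])
  fix r :: real assume r: "\<bar>r\<bar> < \<delta>"
  show "((\<lambda>r. phi (p + r *\<^sub>R a)) has_real_derivative pd phi a (p + r *\<^sub>R a)) (at r)"
    by (rule has_real_derivative_line, rule smooth_on_set_differentiable[OF phi line[OF r]])
  show "phi (p + r *\<^sub>R a) \<le> phi (p + 0 *\<^sub>R a)" using max[OF r] by simp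
next
  have "p \<in> V" using line[of 0] \<open>0 < \<delta>\<close> by simp
  then show "((\<lambda>r. pd phi a (p + r *\<^sub>R a)) has_real_derivative pd (pd phi a) a p) (at 0)"
    using has_real_derivative_line[of "pd phi a" p 0 a] smooth_on_set_pd_differentiable[OF V phi]
    by simp
qed

lemma pd_eq_zero_at_max:
  fixes phi :: "'c::real_normed_vector \<Rightarrow> real"
  assumes "open S" "x0 \<in> S" "phi differentiable (at x0)" "\<And>x. x \<in> S \<Longrightarrow> phi x \<le> phi x0"
  shows "pd phi h x0 = 0"
proof -
  have "frechet_derivative phi (at x0) = (\<lambda>v. 0)"
    by (rule differential_zero_maxmin[OF assms(2,1), of phi])
       (use assms(3,4) frechet_derivative_works in auto)
  then show ?thesis by (simp add: pd_def)
qed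

text \<open>At a positive maximum of \<open>v - \<epsilon> (t - t0)\<close> on the cylinder, which lies in the parabolic
  interior, the time derivative of \<open>v\<close> is at least \<open>\<epsilon>\<close> while its spatial Laplacian is nonpositive.\<close>

lemma heat_weak_max_principle:
  fixes v :: "real \<times> 'a::euclidean_space \<Rightarrow> real"
  assumes V: "open V" "smooth_on_set V v" "{t0..T} \<times> closure \<Omega> \<subseteq> V"
    and "t0 \<le> T" "open \<Omega>" "bounded \<Omega>" "\<nu> \<ge> 0"
    and heat: "\<And>t x. t \<in> {t0..T} \<Longrightarrow> x \<in> \<Omega> \<Longrightarrow> pd v (1, 0) (t, x) = \<nu> * spatial_lap v (t, x)"
    and init: "\<And>x. x \<in> \<Omega> \<Longrightarrow> v (t0, x) \<le> 0"
    and bdry: "\<And>t x. t \<in> {t0..T} \<Longrightarrow> x \<in> frontier \<Omega> \<Longrightarrow> v (t, x) \<le> 0"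
    and t: "t \<in> {t0..T}" and x: "x \<in> closure \<Omega>"
  shows "v (t, x) \<le> 0"
proof (rule ccontr)
  assume "\<not> v (t, x) \<le> 0"
  define K where "K = {t0..T} \<times> closure \<Omega>"
  define \<epsilon> where "\<epsilon> = v (t, x) / (2 * (T - t0 + 1))"
  have \<epsilon>: "\<epsilon> > 0" using \<open>\<not> v (t, x) \<le> 0\<close> \<open>t0 \<le> T\<close> by (simp add: \<epsilon>_def)
  define z where "z p = v p - \<epsilon> * (fst p - t0)" for p
  have "compact K" unfolding K_def
    by (intro compact_Times compact_Icc) (simp add: \<open>bounded \<Omega>\<close> compact_closure)
  moreover have "continuous_on K z" unfolding z_def
    by (intro continuous_intros continuous_on_subset[OF smooth_on_set_continuous_on[OF V(2)]])
       (use V(3) K_def in auto)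
  moreover have txK: "(t, x) \<in> K" using t x by (simp add: K_def)
  ultimately obtain ts xs where m: "(ts, xs) \<in> K" "\<And>q. q \<in> K \<Longrightarrow> z q \<le> z (ts, xs)"
    using continuous_attains_sup[of K z] by fastforce
  have tsK: "ts \<in> {t0..T}" "xs \<in> closure \<Omega>" using m(1) by (auto simp: K_def)
  have "\<epsilon> * (t - t0) \<le> \<epsilon> * (T - t0 + 1)" using \<epsilon> t by (intro mult_left_mono) auto
  also have "\<dots> = v (t, x) / 2" unfolding \<epsilon>_def using \<open>t0 \<le> T\<close> by (simp add: field_simps)
  finally have "z (ts, xs) > 0" using m(2)[OF txK] \<open>\<not> v (t, x) \<le> 0\<close> by (simp add: z_def)
  moreover have "\<epsilon> * (ts - t0) \<ge> 0" using \<epsilon> tsK by simp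
  ultimately have vpos: "v (ts, xs) > 0" by (simp add: z_def)
  have xs: "xs \<in> \<Omega>"
    using bdry[OF tsK(1)] vpos tsK(2) closure_Un_frontier by fastforce
  have "ts \<noteq> t0" using init[OF xs] vpos by auto
  have pV: "(ts, xs) \<in> V" using V(3) tsK by auto
  have time: "pd v (1, 0) (ts, xs) \<ge> \<epsilon>"
  proof (rule ccontr)
    assume "\<not> ?thesis"
    then have neg: "pd v (1, 0) (ts, xs) - \<epsilon> < 0" by simp
    have "((\<lambda>s. v (s, xs) - \<epsilon> * s) has_real_derivative pd v (1, 0) (ts, xs) - \<epsilon>) (at ts)"
      by (intro DERIV_diff has_real_derivative_time smooth_on_set_differentiable[OF V(2) pV])
         (auto intro!: derivative_eq_intros)
    from DERIV_neg_dec_left[OF this neg] obtain d where d: "d > 0"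
      "\<And>h. h > 0 \<Longrightarrow> h < d \<Longrightarrow> v (ts, xs) - \<epsilon> * ts < v (ts - h, xs) - \<epsilon> * (ts - h)"
      by auto
    define h where "h = min d (ts - t0) / 2"
    have h: "h > 0" "h < d" "ts - h \<ge> t0" using d tsK \<open>ts \<noteq> t0\<close> unfolding h_def
      by (auto simp: min_def field_simps)
    then have "(ts - h, xs) \<in> K" using tsK by (auto simp: K_def)
    from m(2)[OF this] d(2)[OF h(1,2)] show False by (simp add: z_def algebra_simps)
  qed
  obtain \<delta> where \<delta>: "\<delta> > 0" "ball xs \<delta> \<subseteq> \<Omega>" using \<open>open \<Omega>\<close> xs open_contains_ball by blast
  have space: "pd (pd v (0, i)) (0, i) (ts, xs) \<le> 0" if i: "i \<in> Basis" for i
  proof (rule pd2_nonpos_at_line_max[OF V(1,2) \<delta>(1)])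
    fix r :: real assume r: "\<bar>r\<bar> < \<delta>"
    have "xs + r *\<^sub>R i \<in> \<Omega>" using \<delta> r i by (auto simp: dist_norm)
    then have "(ts, xs + r *\<^sub>R i) \<in> K" using tsK closure_subset by (auto simp: K_def)
    then show "(ts, xs) + r *\<^sub>R (0, i) \<in> V" "v ((ts, xs) + r *\<^sub>R (0, i)) \<le> v (ts, xs)"
      using V(3) m(2)[of "(ts, xs + r *\<^sub>R i)"] by (auto simp: K_def z_def)
  qed
  have "pd v (1, 0) (ts, xs) \<le> 0"
    unfolding heat[OF tsK(1) xs] spatial_lap_def
    using space \<open>\<nu> \<ge> 0\<close> by (simp add: mult_nonneg_nonpos sum_nonpos)
  with time \<epsilon> show False by simp
qed

lemma heat_zero_data_eq_zero:
  fixes v :: "real \<times> 'a::euclidean_space \<Rightarrow> real"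
  assumes V: "open V" "smooth_on_set V v" "{t0..T} \<times> closure \<Omega> \<subseteq> V"
    and "t0 \<le> T" "open \<Omega>" "bounded \<Omega>" "\<nu> \<ge> 0"
    and heat: "\<And>t x. t \<in> {t0..T} \<Longrightarrow> x \<in> \<Omega> \<Longrightarrow> pd v (1, 0) (t, x) = \<nu> * spatial_lap v (t, x)"
    and init: "\<And>x. x \<in> \<Omega> \<Longrightarrow> v (t0, x) = 0"
    and bdry: "\<And>t x. t \<in> {t0..T} \<Longrightarrow> x \<in> frontier \<Omega> \<Longrightarrow> v (t, x) = 0"
    and t: "t \<in> {t0..T}" and x: "x \<in> closure \<Omega>"
  shows "v (t, x) = 0"
proof -
  have "v (t, x) \<le> 0"
    by (rule heat_weak_max_principle[OF V assms(4-7) heat _ _ t x]) (simp_all add: init bdry)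
  moreover have "- v (t, x) \<le> 0"
  proof (rule heat_weak_max_principle[OF V(1) smooth_on_set_minus[OF V(1,2)] V(3) assms(4-7) _ _ _ t x])
    fix s y assume s: "s \<in> {t0..T}" and y: "y \<in> \<Omega>"
    then have p: "(s, y) \<in> V" using V(3) closure_subset by blast
    have "pd (pd (\<lambda>q. - v q) (0, i)) (0, i) (s, y) = - pd (pd v (0, i)) (0, i) (s, y)" for i
    proof -
      have "pd (pd (\<lambda>q. - v q) (0, i)) (0, i) (s, y) = pd (\<lambda>q. - pd v (0, i) q) (0, i) (s, y)"
        by (rule pd_cong_smooth[OF V(1) smooth_on_set_minus[OF V(1) smooth_on_set_pd[OF V(1,2)]] _ p])
           (rule pd_minus[OF smooth_on_set_differentiable[OF V(2)]])
      also have "\<dots> = - pd (pd v (0, i)) (0, i) (s, y)"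
        by (rule pd_minus[OF smooth_on_set_pd_differentiable[OF V(1,2) p]])
      finally show ?thesis .
    qed
    then show "pd (\<lambda>q. - v q) (1, 0) (s, y) = \<nu> * spatial_lap (\<lambda>q. - v q) (s, y)"
      using heat[OF s y] pd_minus[OF smooth_on_set_differentiable[OF V(2) p]]
      by (simp add: spatial_lap_def sum_negf)
  qed (simp_all add: init bdry)
  ultimately show ?thesis by simp
qed

lemma inner_self_line:
  "(p + r *\<^sub>R h - y) \<bullet> (p + r *\<^sub>R h - y) = (p - y) \<bullet> (p - y) + 2 * r * ((p - y) \<bullet> h) + r * r * (h \<bullet> h)"
proof -
  have "p + r *\<^sub>R h - y = (p - y) + r *\<^sub>R h" by (simp add: algebra_simps)
  then show ?thesis by (simp add: inner_add_left inner_add_right inner_commute algebra_simps)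
qed

lemma has_real_derivative_exp_quadratic:
  "((\<lambda>r. exp (- \<alpha> * (Q + 2 * r * c + r * r * H))) has_real_derivative
     exp (- \<alpha> * (Q + 2 * r * c + r * r * H)) * (- \<alpha> * (2 * c + 2 * r * H))) (at r)"
  by (auto intro!: derivative_eq_intros simp: algebra_simps)

lemma has_real_derivative_exp_quadratic_deriv:
  "((\<lambda>r. exp (- \<alpha> * (Q + 2 * r * c + r * r * H)) * (- \<alpha> * (2 * c + 2 * r * H))) has_real_derivative
     exp (- \<alpha> * Q) * (4 * \<alpha> * \<alpha> * c * c - 2 * \<alpha> * H)) (at 0)"
proof -
  have "((\<lambda>r. - \<alpha> * (2 * c + 2 * r * H)) has_real_derivative (- \<alpha> * (2 * H))) (at 0)"
    by (auto intro!: derivative_eq_intros)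
  from DERIV_mult[OF has_real_derivative_exp_quadratic[of \<alpha> Q c H 0] this]
  show ?thesis by (simp add: algebra_simps)
qed

text \<open>The Gaussian \<open>exp (- \<alpha> |x - y|\<^sup>2)\<close> is strictly subharmonic where
  \<open>4 \<alpha> |x - y|\<^sup>2 > 2 DIM('a)\<close>, so adding it to a subharmonic function leaves no room for a local
  maximum there.\<close>

lemma subharmonic_plus_gaussian_no_local_max:
  fixes phi :: "'a::euclidean_space \<Rightarrow> real"
  assumes V: "open V" "smooth_on_set V phi" and \<delta>: "0 < \<delta>" "ball p \<delta> \<subseteq> V"
    and sub: "lap phi p \<ge> 0" and "\<epsilon> > 0" "\<alpha> > 0"
    and far: "2 * real DIM('a) < 4 * \<alpha> * ((p - y) \<bullet> (p - y))"
    and max: "\<And>x. x \<in> ball p \<delta> \<Longrightarrow>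
      phi x + \<epsilon> * exp (- \<alpha> * ((x - y) \<bullet> (x - y))) \<le> phi p + \<epsilon> * exp (- \<alpha> * ((p - y) \<bullet> (p - y)))"
  shows False
proof -
  define q where "q = p - y"
  define Q where "Q = q \<bullet> q"
  have p: "p \<in> V" using \<delta> by auto
  have line: "pd (pd phi i) i p + \<epsilon> * (exp (- \<alpha> * Q) * (4 * \<alpha> * \<alpha> * (q \<bullet> i) * (q \<bullet> i) - 2 * \<alpha>)) \<le> 0"
    if i: "i \<in> Basis" for i
  proof (rule DERIV_second_nonpos_at_local_max[OF \<delta>(1),
        of "\<lambda>r. phi (p + r *\<^sub>R i) + \<epsilon> * exp (- \<alpha> * (Q + 2 * r * (q \<bullet> i) + r * r * 1))"
          "\<lambda>r. pd phi i (p + r *\<^sub>R i) +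
               \<epsilon> * (exp (- \<alpha> * (Q + 2 * r * (q \<bullet> i) + r * r * 1)) * (- \<alpha> * (2 * (q \<bullet> i) + 2 * r * 1)))"])
    fix r :: real assume "\<bar>r\<bar> < \<delta>"
    then have r: "p + r *\<^sub>R i \<in> ball p \<delta>" using i by (simp add: dist_norm)
    then show "((\<lambda>r. phi (p + r *\<^sub>R i) + \<epsilon> * exp (- \<alpha> * (Q + 2 * r * (q \<bullet> i) + r * r * 1)))
        has_real_derivative pd phi i (p + r *\<^sub>R i) +
          \<epsilon> * (exp (- \<alpha> * (Q + 2 * r * (q \<bullet> i) + r * r * 1)) * (- \<alpha> * (2 * (q \<bullet> i) + 2 * r * 1)))) (at r)"
      using \<delta>(2) by (intro DERIV_add DERIV_cmult has_real_derivative_exp_quadratic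
          has_real_derivative_line smooth_on_set_differentiable[OF V(2)]) auto
    have "(p + r *\<^sub>R i - y) \<bullet> (p + r *\<^sub>R i - y) = Q + 2 * r * (q \<bullet> i) + r * r * 1"
      using inner_self_line[of p r i y] i by (simp add: Q_def q_def)
    with max[OF r] show "phi (p + r *\<^sub>R i) + \<epsilon> * exp (- \<alpha> * (Q + 2 * r * (q \<bullet> i) + r * r * 1)) \<le>
        phi (p + 0 *\<^sub>R i) + \<epsilon> * exp (- \<alpha> * (Q + 2 * 0 * (q \<bullet> i) + 0 * 0 * 1))"
      by (simp add: Q_def q_def)
  next
    have "((\<lambda>r. pd phi i (p + r *\<^sub>R i)) has_real_derivative pd (pd phi i) i p) (at 0)"
      using has_real_derivative_line[of "pd phi i" p 0 i] smooth_on_set_pd_differentiable[OF V p]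
      by simp
    from DERIV_add[OF this DERIV_cmult[OF has_real_derivative_exp_quadratic_deriv[of \<alpha> Q "q \<bullet> i" 1]]]
    show "((\<lambda>r. pd phi i (p + r *\<^sub>R i) +
               \<epsilon> * (exp (- \<alpha> * (Q + 2 * r * (q \<bullet> i) + r * r * 1)) * (- \<alpha> * (2 * (q \<bullet> i) + 2 * r * 1))))
        has_real_derivative pd (pd phi i) i p + \<epsilon> * (exp (- \<alpha> * Q) *
          (4 * \<alpha> * \<alpha> * (q \<bullet> i) * (q \<bullet> i) - 2 * \<alpha>))) (at 0)"
      by simp
  qed
  define X where "X = exp (- \<alpha> * Q)"
  have "(\<Sum>i\<in>Basis. pd (pd phi i) i p + \<epsilon> * (X * (4 * \<alpha> * \<alpha> * (q \<bullet> i) * (q \<bullet> i) - 2 * \<alpha>))) =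
      lap phi p + (4 * \<epsilon> * X * \<alpha> * \<alpha>) * (\<Sum>i\<in>Basis. (q \<bullet> i) * (q \<bullet> i)) - real DIM('a) * (2 * \<epsilon> * X * \<alpha>)"
    by (simp add: lap_eq_pd algebra_simps sum.distrib sum_subtractf sum_distrib_left)
  also have "\<dots> = lap phi p + \<epsilon> * X * \<alpha> * (4 * \<alpha> * Q - 2 * real DIM('a))"
    by (simp add: Q_def euclidean_inner[of q q] algebra_simps)
  finally have "lap phi p + \<epsilon> * X * \<alpha> * (4 * \<alpha> * Q - 2 * real DIM('a)) \<le> 0"
    using line by (metis (no_types, lifting) X_def sum_nonpos)
  moreover have "\<epsilon> * X * \<alpha> * (4 * \<alpha> * Q - 2 * real DIM('a)) > 0"
    using \<open>\<epsilon> > 0\<close> \<open>\<alpha> > 0\<close> far by (simp add: X_def Q_def q_def)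
  ultimately show False using sub by simp
qed

text \<open>By the comparison function
  \<open>phi - phi x0 + \<epsilon> (exp (- \<alpha> |x - y|\<^sup>2) - exp (- \<alpha> R\<^sup>2))\<close> on the annulus
  \<open>R/2 \<le> |x - y| \<le> R\<close>.\<close>

lemma hopf_lemma:
  fixes phi :: "'a::euclidean_space \<Rightarrow> real"
  assumes V: "open V" "smooth_on_set V phi" and cball: "cball y R \<subseteq> V" and R: "R > 0"
    and sub: "\<And>x. x \<in> ball y R \<Longrightarrow> lap phi x \<ge> 0"
    and x0: "dist y x0 = R" and less: "\<And>x. x \<in> ball y R \<Longrightarrow> phi x < phi x0"
  shows "pd phi (x0 - y) x0 > 0"
proof -
  define \<alpha> where "\<alpha> = (2 * real DIM('a) + 1) / (R * R)"
  have \<alpha>: "\<alpha> > 0" "\<alpha> * (R * R) = 2 * real DIM('a) + 1" using R by (auto simp: \<alpha>_def)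
  define E where "E = exp (- \<alpha> * (R * R))"
  define v where "v x = exp (- \<alpha> * ((x - y) \<bullet> (x - y))) - E" for x
  have v_sphere: "v x = 0" if "dist y x = R" for x
  proof -
    have "(x - y) \<bullet> (x - y) = R * R"
      using that by (simp add: dist_norm norm_minus_commute power2_eq_square[symmetric] dot_square_norm)
    then show ?thesis by (simp add: v_def E_def)
  qed
  have cphi: "continuous_on (cball y R) phi"
    using continuous_on_subset[OF smooth_on_set_continuous_on[OF V(2)] cball] .
  have le_x0: "phi x \<le> phi x0" if "x \<in> cball y R" for x
    using continuous_le_on_closure[of "ball y R" phi x "phi x0"] cphi that R less
    by (auto simp: less_imp_le)
  obtain m where m: "m < 0" "\<And>x. x \<in> sphere y (R/2) \<Longrightarrow> phi x - phi x0 \<le> m"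
  proof -
    have "continuous_on (sphere y (R/2)) (\<lambda>x. phi x - phi x0)"
      by (intro continuous_intros continuous_on_subset[OF cphi]) (use R in auto)
    moreover have "sphere y (R/2) \<noteq> {}" using R by simp
    ultimately obtain xm where xm: "xm \<in> sphere y (R/2)"
      "\<And>x. x \<in> sphere y (R/2) \<Longrightarrow> phi x - phi x0 \<le> phi xm - phi x0"
      using continuous_attains_sup[OF compact_sphere] by blast
    moreover have "phi xm - phi x0 < 0" using less[of xm] xm R by simp
    ultimately show ?thesis using that by blast
  qed
  define \<epsilon> where "\<epsilon> = - m / 2"
  have \<epsilon>: "\<epsilon> > 0" using m by (simp add: \<epsilon>_def)
  define z where "z x = phi x - phi x0 + \<epsilon> * v x" for x
  define A where "A = cball y R - ball y (R/2)"
  have "compact A" unfolding A_def by (intro compact_diff) auto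
  moreover have "continuous_on A z" unfolding z_def v_def
    by (intro continuous_intros continuous_on_subset[OF cphi]) (auto simp: A_def)
  moreover have "x0 \<in> A" using x0 R by (auto simp: A_def)
  ultimately obtain pz where pz: "pz \<in> A" "\<And>x. x \<in> A \<Longrightarrow> z x \<le> z pz"
    using continuous_attains_sup[of A z] by blast
  have z_le: "z x \<le> 0" if "x \<in> A" for x
  proof -
    consider "dist y pz = R / 2" | "dist y pz = R" | "R / 2 < dist y pz" "dist y pz < R"
      using pz(1) by (force simp: A_def)
    then have "z pz \<le> 0"
    proof cases
      case 1
      have "exp (- \<alpha> * ((pz - y) \<bullet> (pz - y))) \<le> 1" using \<alpha> by simp
      moreover have "E > 0" by (simp add: E_def)
      ultimately have "v pz \<le> 1" unfolding v_def by linarith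
      then have "\<epsilon> * v pz \<le> \<epsilon>" using \<epsilon> by simp
      moreover have "phi pz - phi x0 \<le> m" using m(2)[of pz] 1 by simp
      ultimately show ?thesis unfolding z_def \<epsilon>_def using m(1) by linarith
    next
      case 2
      then show ?thesis using le_x0[of pz] by (simp add: z_def v_sphere)
    next
      case 3
      have "open {x. R / 2 < dist y x \<and> dist y x < R}"
        by (intro open_Collect_conj open_Collect_less continuous_intros)
      then obtain \<delta> where \<delta>: "\<delta> > 0" "ball pz \<delta> \<subseteq> {x. R / 2 < dist y x \<and> dist y x < R}"
        using 3 open_contains_ball by blast
      have "R * R < 4 * ((pz - y) \<bullet> (pz - y))"
      proof -
        have "R / 2 < norm (pz - y)" using 3 by (simp add: dist_norm norm_minus_commute)
        then have "(R / 2) * (R / 2) < norm (pz - y) * norm (pz - y)"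
          using R by (intro mult_strict_mono) auto
        then show ?thesis by (simp add: dot_square_norm power2_eq_square)
      qed
      then have "\<alpha> * (R * R) < 4 * \<alpha> * ((pz - y) \<bullet> (pz - y))" using \<alpha>(1) by simp
      then have far: "2 * real DIM('a) < 4 * \<alpha> * ((pz - y) \<bullet> (pz - y))" using \<alpha>(2) by simp
      have False
      proof (rule subharmonic_plus_gaussian_no_local_max[OF V \<delta>(1) _ _ \<epsilon> \<alpha>(1) far])
        show "ball pz \<delta> \<subseteq> V" using \<delta>(2) cball by fastforce
        show "0 \<le> lap phi pz" using 3 sub by simp
        fix x assume "x \<in> ball pz \<delta>"
        then have "x \<in> A" using \<delta>(2) by (auto simp: A_def)
        then show "phi x + \<epsilon> * exp (- \<alpha> * ((x - y) \<bullet> (x - y))) \<le>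
            phi pz + \<epsilon> * exp (- \<alpha> * ((pz - y) \<bullet> (pz - y)))"
          using pz(2) by (simp add: z_def v_def algebra_simps)
      qed
      then show ?thesis ..
    qed
    with pz(2)[OF that] show ?thesis by simp
  qed
  define e where "e = y - x0"
  have e: "norm e = R" using x0 by (simp add: e_def dist_norm)
  have x0V: "x0 \<in> V" using x0 cball by auto
  have segment: "z (x0 + s *\<^sub>R e) \<le> z (x0 + 0 *\<^sub>R e)" if "0 < s" "s < 1/2" for s
  proof -
    have "y - (x0 + s *\<^sub>R e) = (1 - s) *\<^sub>R e" by (simp add: e_def algebra_simps)
    then have "dist y (x0 + s *\<^sub>R e) = (1 - s) * R" using that e by (simp add: dist_norm)
    then have "x0 + s *\<^sub>R e \<in> A" using that R by (auto simp: A_def)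
    then show ?thesis using z_le x0 by (simp add: z_def v_sphere)
  qed
  have "(x0 + s *\<^sub>R e - y) \<bullet> (x0 + s *\<^sub>R e - y) = R * R + 2 * s * (- (R * R)) + s * s * (R * R)" for s
  proof -
    have "x0 - y = - e" by (simp add: e_def)
    then show ?thesis using inner_self_line[of x0 s e y] e by (simp add: dot_square_norm power2_eq_square)
  qed
  then have z_line: "z (x0 + s *\<^sub>R e) = phi (x0 + s *\<^sub>R e) - phi x0 +
      \<epsilon> * (exp (- \<alpha> * (R * R + 2 * s * (- (R * R)) + s * s * (R * R))) - E)" for s
    by (simp add: z_def v_def)
  define dv where "dv = exp (- \<alpha> * (R * R)) * (- \<alpha> * (2 * (- (R * R))))"
  have "dv > 0" using \<alpha> R by (simp add: dv_def)
  have "((\<lambda>s. z (x0 + s *\<^sub>R e)) has_real_derivative pd phi e x0 + \<epsilon> * dv) (at 0)"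
    unfolding z_line
    using DERIV_add[OF DERIV_diff[OF has_real_derivative_line[of phi x0 0 e] DERIV_const]
        DERIV_cmult[OF DERIV_diff[OF has_real_derivative_exp_quadratic[of \<alpha> "R * R" "- (R * R)" "R * R" 0]
        DERIV_const]]]
      smooth_on_set_differentiable[OF V(2) x0V]
    by (simp add: dv_def)
  from DERIV_nonpos_at_right_max[where c="1/2", OF this _ segment] have "pd phi e x0 + \<epsilon> * dv \<le> 0" by simp
  moreover have "\<epsilon> * dv > 0" using \<epsilon> \<open>dv > 0\<close> by simp
  ultimately have "pd phi e x0 < 0" by linarith
  moreover have "pd phi (x0 - y) x0 = - pd phi e x0"
    using pd_scaleR_dir[OF smooth_on_set_differentiable[OF V(2) x0V], of "-1" e] by (simp add: e_def)
  ultimately show ?thesis by simp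
qed

lemma subharmonic_max_set_open:
  fixes phi :: "'a::euclidean_space \<Rightarrow> real"
  assumes V: "open V" "smooth_on_set V phi" "\<Omega> \<subseteq> V" and "open \<Omega>"
    and sub: "\<And>x. x \<in> \<Omega> \<Longrightarrow> lap phi x \<ge> 0" and le: "\<And>x. x \<in> \<Omega> \<Longrightarrow> phi x \<le> M"
  shows "open {x\<in>\<Omega>. phi x = M}"
proof (unfold open_contains_ball, intro ballI)
  fix xa assume xa: "xa \<in> {x\<in>\<Omega>. phi x = M}"
  then obtain d where d: "d > 0" "ball xa d \<subseteq> \<Omega>" using \<open>open \<Omega>\<close> open_contains_ball by blast
  have cphi: "continuous_on \<Omega> phi" using continuous_on_subset[OF smooth_on_set_continuous_on[OF V(2)] V(3)] .
  have "ball xa (d/2) \<subseteq> {x\<in>\<Omega>. phi x = M}"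
  proof (rule subsetI, rule ccontr)
    fix y assume y: "y \<in> ball xa (d/2)" and "y \<notin> {x\<in>\<Omega>. phi x = M}"
    have "y \<in> \<Omega>" using y d by auto
    then have "phi y < M" using \<open>y \<notin> _\<close> le by force
    define \<rho> where "\<rho> = dist y xa"
    have cball_\<rho>: "cball y \<rho> \<subseteq> ball xa d"
    proof
      fix x assume "x \<in> cball y \<rho>"
      then have "dist xa x \<le> dist xa y + \<rho>" using dist_triangle[of xa x y] by simp
      then show "x \<in> ball xa d" using y by (simp add: \<rho>_def dist_commute)
    qed
    define K where "K = {x\<in>cball y \<rho>. phi x = M}"
    have "closed K" unfolding K_def
      by (rule continuous_closed_preimage_constant) (use continuous_on_subset[OF cphi] cball_\<rho> d in auto)
    moreover have "xa \<in> K" using xa by (simp add: K_def \<rho>_def dist_commute)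
    ultimately obtain x0 where x0: "x0 \<in> K" "\<And>x. x \<in> K \<Longrightarrow> dist y x0 \<le> dist y x"
      using distance_attains_inf[of K y] by blast
    define R where "R = dist y x0"
    have "R > 0" using x0(1) \<open>phi y < M\<close> by (auto simp: K_def R_def)
    have "R \<le> \<rho>" using x0(2)[OF \<open>xa \<in> K\<close>] by (simp add: R_def \<rho>_def)
    then have "cball y R \<subseteq> cball y \<rho>" by auto
    then have cball_R: "cball y R \<subseteq> \<Omega>" using cball_\<rho> d by blast
    have x0\<Omega>: "x0 \<in> \<Omega>" and "phi x0 = M" using x0(1) cball_\<rho> d by (auto simp: K_def)
    have "pd phi (x0 - y) x0 > 0"
    proof (rule hopf_lemma[OF V(1,2) _ \<open>R > 0\<close>])
      show "cball y R \<subseteq> V" using cball_R V(3) by auto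
      show "dist y x0 = R" by (simp add: R_def)
      fix x assume x: "x \<in> ball y R"
      then have "x \<in> \<Omega>" using cball_R by auto
      then show "0 \<le> lap phi x" by (rule sub)
      have "x \<notin> K" using x x0(2) by (force simp: R_def)
      then show "phi x < phi x0" using x \<open>R \<le> \<rho>\<close> le[OF \<open>x \<in> \<Omega>\<close>] \<open>phi x0 = M\<close> by (auto simp: K_def)
    qed
    moreover have "pd phi (x0 - y) x0 = 0"
      by (rule pd_eq_zero_at_max[OF \<open>open \<Omega>\<close> x0\<Omega> smooth_on_set_differentiable[OF V(2)]])
         (use x0\<Omega> V(3) le \<open>phi x0 = M\<close> in auto)
    ultimately show False by simp
  qed
  then show "\<exists>e>0. ball xa e \<subseteq> {x\<in>\<Omega>. phi x = M}" using d(1) half_gt_zero by blast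
qed

lemma subharmonic_strong_max_principle:
  fixes phi :: "'a::euclidean_space \<Rightarrow> real"
  assumes V: "open V" "smooth_on_set V phi" "\<Omega> \<subseteq> V" and "open \<Omega>" "connected \<Omega>"
    and sub: "\<And>x. x \<in> \<Omega> \<Longrightarrow> lap phi x \<ge> 0" and le: "\<And>x. x \<in> \<Omega> \<Longrightarrow> phi x \<le> M"
    and x1: "x1 \<in> \<Omega>" "phi x1 = M" and x: "x \<in> \<Omega>"
  shows "phi x = M"
proof -
  have "open (\<Omega> \<inter> phi -` {..<M})"
    by (rule continuous_open_preimage[OF continuous_on_subset[OF smooth_on_set_continuous_on[OF V(2)] V(3)]
          \<open>open \<Omega>\<close>]) auto
  moreover have "\<Omega> \<subseteq> {x\<in>\<Omega>. phi x = M} \<union> (\<Omega> \<inter> phi -` {..<M})" using le by force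
  moreover have "{x\<in>\<Omega>. phi x = M} \<inter> (\<Omega> \<inter> phi -` {..<M}) \<inter> \<Omega> = {}" by auto
  moreover have "x1 \<in> {x\<in>\<Omega>. phi x = M} \<inter> \<Omega>" using x1 by simp
  ultimately have "\<Omega> \<inter> phi -` {..<M} \<inter> \<Omega> = {}"
    using connectedD[OF \<open>connected \<Omega>\<close> subharmonic_max_set_open[OF V \<open>open \<Omega>\<close> sub le]] by blast
  then show ?thesis using le x by force
qed

lemma pd2_euclidean_expansion:
  fixes psi :: "'a::euclidean_space \<Rightarrow> real"
  assumes U: "open U" "smooth_on_set U psi" and p: "p \<in> U"
  shows "pd (pd psi d) d p = (\<Sum>i\<in>Basis. (d \<bullet> i) * (\<Sum>j\<in>Basis. (d \<bullet> j) * pd (pd psi i) j p))"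
proof -
  have "smooth_on_set U (\<lambda>y. \<Sum>i\<in>Basis. (d \<bullet> i) *\<^sub>R pd psi i y)"
    by (intro smooth_on_set_sum smooth_on_set_scaleR smooth_on_set_pd U) auto
  then have "pd (pd psi d) d p = pd (\<lambda>y. \<Sum>i\<in>Basis. (d \<bullet> i) *\<^sub>R pd psi i y) d p"
    by (rule pd_cong_smooth[OF U(1) _ _ p])
       (simp add: pd_euclidean_expansion[OF smooth_on_set_differentiable[OF U(2)]])
  also have "\<dots> = (\<Sum>i\<in>Basis. pd (\<lambda>y. (d \<bullet> i) *\<^sub>R pd psi i y) d p)"
    by (rule pd_sum) (simp, rule differentiable_bounded_linear[OF bounded_linear_scaleR_right],
        rule smooth_on_set_pd_differentiable[OF U p])
  also have "\<dots> = (\<Sum>i\<in>Basis. (d \<bullet> i) * pd (pd psi i) d p)"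
    by (rule sum.cong[OF refl]) (subst pd_scaleR[OF smooth_on_set_pd_differentiable[OF U p]], simp)
  also have "\<dots> = (\<Sum>i\<in>Basis. (d \<bullet> i) * (\<Sum>j\<in>Basis. (d \<bullet> j) * pd (pd psi i) j p))"
    by (simp add: pd_euclidean_expansion[OF smooth_on_set_pd_differentiable[OF U p], where h=d])
  finally show ?thesis .
qed

lemma abs_pd2_le:
  fixes psi :: "'a::euclidean_space \<Rightarrow> real"
  assumes U: "open U" "smooth_on_set U psi" and p: "p \<in> U"
  shows "\<bar>pd (pd psi d) d p\<bar> \<le> (\<Sum>i\<in>Basis. \<Sum>j\<in>Basis. \<bar>pd (pd psi i) j p\<bar>) * (norm d * norm d)"
proof -
  have "\<bar>pd (pd psi d) d p\<bar> \<le> (\<Sum>i\<in>Basis. \<bar>(d \<bullet> i) * (\<Sum>j\<in>Basis. (d \<bullet> j) * pd (pd psi i) j p)\<bar>)"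
    unfolding pd2_euclidean_expansion[OF U p] by (rule sum_abs)
  also have "\<dots> \<le> (\<Sum>i\<in>Basis. norm d * (\<Sum>j\<in>Basis. norm d * \<bar>pd (pd psi i) j p\<bar>))"
  proof (rule sum_mono)
    fix i :: 'a assume i: "i \<in> Basis"
    have "\<bar>\<Sum>j\<in>Basis. (d \<bullet> j) * pd (pd psi i) j p\<bar> \<le> (\<Sum>j\<in>Basis. \<bar>(d \<bullet> j) * pd (pd psi i) j p\<bar>)"
      by (rule sum_abs)
    also have "\<dots> \<le> (\<Sum>j\<in>Basis. norm d * \<bar>pd (pd psi i) j p\<bar>)"
      by (rule sum_mono) (auto simp: abs_mult intro!: mult_right_mono Basis_le_norm)
    finally show "\<bar>(d \<bullet> i) * (\<Sum>j\<in>Basis. (d \<bullet> j) * pd (pd psi i) j p)\<bar> \<le>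
        norm d * (\<Sum>j\<in>Basis. norm d * \<bar>pd (pd psi i) j p\<bar>)"
      unfolding abs_mult by (rule mult_mono[OF Basis_le_norm[OF i]]) auto
  qed
  also have "\<dots> = (\<Sum>i\<in>Basis. \<Sum>j\<in>Basis. \<bar>pd (pd psi i) j p\<bar>) * (norm d * norm d)"
    by (simp add: sum_distrib_left sum_distrib_right algebra_simps)
  finally show ?thesis .
qed

lemma smooth_second_order_upper_bound:
  fixes psi :: "'a::euclidean_space \<Rightarrow> real"
  assumes U: "open U" "smooth_on_set U psi" and x0: "x0 \<in> U"
  obtains \<delta> C where "\<delta> > 0" "C \<ge> 0" "cball x0 \<delta> \<subseteq> U"
    "\<And>x. x \<in> cball x0 \<delta> \<Longrightarrow> psi x \<le> psi x0 + pd psi (x - x0) x0 + C * (norm (x - x0) * norm (x - x0))"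
proof -
  obtain \<delta> where \<delta>: "\<delta> > 0" "cball x0 \<delta> \<subseteq> U" using U(1) x0 open_contains_cball by blast
  define Hn where "Hn p = (\<Sum>i\<in>Basis. \<Sum>j\<in>Basis. \<bar>pd (pd psi i) j p\<bar>)" for p
  have cont: "continuous_on (cball x0 \<delta>) Hn" unfolding Hn_def
    by (intro continuous_intros continuous_on_subset[OF smooth_on_set_continuous_on[OF
          smooth_on_set_pd[OF U(1) smooth_on_set_pd[OF U]]] \<delta>(2)])
  obtain pm where pm: "\<And>p. p \<in> cball x0 \<delta> \<Longrightarrow> Hn p \<le> Hn pm"
    using continuous_attains_sup[OF compact_cball _ cont] \<delta> by fastforce
  define C where "C = Hn pm"
  have "C \<ge> 0" by (simp add: C_def Hn_def sum_nonneg)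
  have "psi x \<le> psi x0 + pd psi (x - x0) x0 + C * (norm (x - x0) * norm (x - x0))"
    if x: "x \<in> cball x0 \<delta>" for x
  proof -
    define d where "d = x - x0"
    have seg: "x0 + s *\<^sub>R d \<in> cball x0 \<delta>" if "0 \<le> s" "s \<le> 1" for s
    proof -
      have "norm (s *\<^sub>R d) \<le> norm d" using that by (simp add: mult_left_le_one_le)
      also have "norm d \<le> \<delta>" using x by (simp add: d_def dist_norm norm_minus_commute)
      finally show ?thesis by (simp add: dist_norm)
    qed
    have segU: "x0 + s *\<^sub>R d \<in> U" if "0 \<le> s" "s \<le> 1" for s
      using seg[OF that] \<delta>(2) by blast
    have bound: "pd (pd psi d) d (x0 + r *\<^sub>R d) \<le> C * (norm d * norm d)" if "0 \<le> r" "r \<le> 1" for r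
    proof -
      have "Hn (x0 + r *\<^sub>R d) * (norm d * norm d) \<le> C * (norm d * norm d)"
        unfolding C_def by (intro mult_right_mono pm seg that) auto
      moreover have "\<bar>pd (pd psi d) d (x0 + r *\<^sub>R d)\<bar> \<le> Hn (x0 + r *\<^sub>R d) * (norm d * norm d)"
        unfolding Hn_def by (rule abs_pd2_le[OF U segU[OF that]])
      ultimately show ?thesis by linarith
    qed
    define g where "g r = psi (x0 + r *\<^sub>R d) - r * pd psi d x0" for r
    have g': "(g has_real_derivative pd psi d (x0 + r *\<^sub>R d) - pd psi d x0) (at r)"
      if "0 \<le> r" "r \<le> 1" for r
      unfolding g_def
      using DERIV_diff[OF has_real_derivative_line[OF smooth_on_set_differentiable[OF U(2) segU[OF that]]]
          DERIV_cmult_Id[of "pd psi d x0" r]]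
      by (simp add: mult.commute)
    obtain \<eta> where \<eta>: "0 < \<eta>" "\<eta> < 1" "g 1 - g 0 = pd psi d (x0 + \<eta> *\<^sub>R d) - pd psi d x0"
      using MVT2[of 0 1 g "\<lambda>r. pd psi d (x0 + r *\<^sub>R d) - pd psi d x0"] g' by auto
    have g'': "((\<lambda>r. pd psi d (x0 + r *\<^sub>R d)) has_real_derivative pd (pd psi d) d (x0 + r *\<^sub>R d)) (at r)"
      if "0 \<le> r" "r \<le> 1" for r
      by (rule has_real_derivative_line, rule smooth_on_set_pd_differentiable[OF U segU[OF that]])
    obtain \<xi> where \<xi>: "0 < \<xi>" "\<xi> < \<eta>"
      "pd psi d (x0 + \<eta> *\<^sub>R d) - pd psi d (x0 + 0 *\<^sub>R d) = (\<eta> - 0) * pd (pd psi d) d (x0 + \<xi> *\<^sub>R d)"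
      using MVT2[of 0 \<eta> "\<lambda>r. pd psi d (x0 + r *\<^sub>R d)" "\<lambda>r. pd (pd psi d) d (x0 + r *\<^sub>R d)"] g'' \<eta>
      by auto
    have "\<eta> * pd (pd psi d) d (x0 + \<xi> *\<^sub>R d) \<le> \<eta> * (C * (norm d * norm d))"
      using bound[of \<xi>] \<xi> \<eta> by (intro mult_left_mono) auto
    also have "\<dots> \<le> C * (norm d * norm d)"
      using \<eta> \<open>C \<ge> 0\<close> by (intro mult_left_le_one_le) auto
    finally have "g 1 - g 0 \<le> C * (norm d * norm d)" using \<eta>(3) \<xi>(3) by simp
    then show ?thesis by (simp add: g_def d_def)
  qed
  with \<delta> \<open>C \<ge> 0\<close> that show ?thesis by blast
qed

lemma grad_inner_eq_pd:
  assumes "phi differentiable (at x)"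
  shows "grad phi x \<bullet> h = pd phi h x"
  unfolding grad_def dirD_eq_pd pd_euclidean_expansion[OF assms, of h]
  by (simp add: inner_sum_left inner_sum_right, rule sum.cong) (simp_all add: inner_commute)

lemma smooth_boundary_normal_chart:
  assumes "smooth_boundary_normal \<Omega> nrm" "open \<Omega>" "x0 \<in> frontier \<Omega>"
  obtains U psi where "open U" "x0 \<in> U" "smooth_on_set U (psi :: 'a::euclidean_space \<Rightarrow> real)"
    "grad psi x0 \<noteq> 0" "\<Omega> \<inter> U = {y\<in>U. psi y < 0}" "psi x0 = 0"
    "nrm x0 = (1 / norm (grad psi x0)) *\<^sub>R grad psi x0"
proof -
  from assms(1,3) have "\<exists>U psi. open U \<and> x0 \<in> U \<and> smooth_on_set U (psi :: 'a \<Rightarrow> real) \<and>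
        (\<forall>y\<in>U. grad psi y \<noteq> 0) \<and> \<Omega> \<inter> U = {y\<in>U. psi y < 0} \<and>
        (\<forall>y\<in>U \<inter> frontier \<Omega>. nrm y = (1 / norm (grad psi y)) *\<^sub>R grad psi y)"
    unfolding smooth_boundary_normal_def by (rule bspec)
  then obtain U psi where U: "open U" "x0 \<in> U" "smooth_on_set U (psi :: 'a \<Rightarrow> real)"
    "\<forall>y\<in>U. grad psi y \<noteq> 0" "\<Omega> \<inter> U = {y\<in>U. psi y < 0}"
    "\<forall>y\<in>U \<inter> frontier \<Omega>. nrm y = (1 / norm (grad psi y)) *\<^sub>R grad psi y"
    by (elim exE conjE) assumption
  have "x0 \<notin> \<Omega>" using assms(2,3) by (simp add: frontier_def interior_open)
  then have "x0 \<notin> {y\<in>U. psi y < 0}" using U(5) by blast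
  then have "psi x0 \<ge> 0" using U(2) by simp
  moreover have "psi x0 \<le> 0"
  proof (rule ccontr)
    assume "\<not> psi x0 \<le> 0"
    have "continuous (at x0) psi"
      using smooth_on_set_continuous_on[OF U(3)] U(1,2) continuous_on_eq_continuous_at by blast
    then have "eventually (\<lambda>y. psi y > 0) (at x0)"
      using \<open>\<not> psi x0 \<le> 0\<close> by (simp add: continuous_at order_tendstoD(1))
    moreover have "eventually (\<lambda>y. y \<in> U) (at x0)"
      using U(1,2) eventually_at_topological by blast
    ultimately have "eventually (\<lambda>y. y \<notin> \<Omega>) (at x0)"
      by eventually_elim (use U(5) in force)
    moreover have "x0 \<in> closure \<Omega>" using assms(3) by (simp add: frontier_def)
    then have "frequently (\<lambda>y. y \<in> \<Omega>) (at x0)"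
      using \<open>x0 \<notin> \<Omega>\<close> by (simp add: closure_def islimpt_conv_frequently_at)
    ultimately show False by (simp add: frequently_def)
  qed
  ultimately have "psi x0 = 0" by simp
  moreover have "nrm x0 = (1 / norm (grad psi x0)) *\<^sub>R grad psi x0" using U(2,6) assms(3) by blast
  ultimately show ?thesis using that[OF U(1,2,3) _ U(5)] U(2,4) by blast
qed

text \<open>The defining function satisfies
  \<open>psi x \<le> g0 (n \<bullet> (x - x0)) + C |x - x0|\<^sup>2\<close> near \<open>x0\<close>, which is negative on a small ball
  tangent at \<open>x0\<close> with inward normal \<open>- n\<close>.\<close>

lemma interior_ball_condition:
  assumes "smooth_boundary_normal \<Omega> nrm" "open \<Omega>" "x0 \<in> frontier \<Omega>"
  obtains r where "r > 0" "ball (x0 - r *\<^sub>R nrm x0) r \<subseteq> \<Omega>" "norm (nrm x0) = 1"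
proof -
  obtain U psi where U: "open U" "x0 \<in> U" "smooth_on_set U (psi :: 'a \<Rightarrow> real)"
    "grad psi x0 \<noteq> 0" "\<Omega> \<inter> U = {y\<in>U. psi y < 0}" "psi x0 = 0"
    "nrm x0 = (1 / norm (grad psi x0)) *\<^sub>R grad psi x0"
    using smooth_boundary_normal_chart[OF assms] by blast
  define g0 where "g0 = norm (grad psi x0)"
  define n where "n = nrm x0"
  have g0: "g0 > 0" using U(4) by (simp add: g0_def)
  have n: "norm n = 1" "n \<bullet> n = 1"
    using g0 U(7) by (simp_all add: n_def g0_def power2_norm_eq_inner[symmetric])
  have pd_psi: "pd psi h x0 = g0 * (n \<bullet> h)" for h
    using grad_inner_eq_pd[OF smooth_on_set_differentiable[OF U(3,2)], of h] g0 U(7)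
    by (simp add: n_def g0_def)
  obtain \<delta> C where \<delta>: "\<delta> > 0" "C \<ge> 0" "cball x0 \<delta> \<subseteq> U"
    "\<And>x. x \<in> cball x0 \<delta> \<Longrightarrow> psi x \<le> psi x0 + pd psi (x - x0) x0 + C * (norm (x - x0) * norm (x - x0))"
    using smooth_second_order_upper_bound[OF U(1,3,2)] by blast
  define r where "r = min (\<delta> / 2) (g0 / (2 * (C + 1)))"
  have r: "r > 0" "r \<le> \<delta> / 2" "2 * r * C \<le> g0"
  proof -
    show "r > 0" using \<delta> g0 by (simp add: r_def)
    show "r \<le> \<delta> / 2" unfolding r_def by (rule min.cobounded1)
    have "r \<le> g0 / (2 * (C + 1))" unfolding r_def by (rule min.cobounded2)
    then have "r * (2 * (C + 1)) \<le> g0" using \<delta>(2) by (simp add: pos_le_divide_eq)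
    then show "2 * r * C \<le> g0" using \<open>r > 0\<close> by (simp add: algebra_simps)
  qed
  have "ball (x0 - r *\<^sub>R n) r \<subseteq> \<Omega>"
  proof
    fix x assume x: "x \<in> ball (x0 - r *\<^sub>R n) r"
    define d where "d = x - x0"
    have "norm (d + r *\<^sub>R n) < r" using x by (simp add: d_def dist_norm norm_minus_commute algebra_simps)
    then have "(d + r *\<^sub>R n) \<bullet> (d + r *\<^sub>R n) < r * r"
      using r(1) by (simp add: dot_square_norm power2_eq_square mult_strict_mono)
    then have nd: "2 * r * (n \<bullet> d) < - (d \<bullet> d)"
      using n(2) by (simp add: inner_add_left inner_add_right inner_commute algebra_simps)
    have "norm d \<le> norm (d + r *\<^sub>R n) + norm (r *\<^sub>R n)"
      by (metis add_diff_cancel_right' norm_triangle_ineq4)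
    also have "\<dots> < 2 * r" using \<open>norm (d + r *\<^sub>R n) < r\<close> n r by simp
    finally have xc: "x \<in> cball x0 \<delta>" using r by (simp add: d_def dist_norm norm_minus_commute)
    have "psi x \<le> g0 * (n \<bullet> d) + C * (d \<bullet> d)"
      using \<delta>(4)[OF xc] U(6) pd_psi by (simp add: d_def dot_square_norm power2_eq_square)
    moreover have "2 * r * (g0 * (n \<bullet> d) + C * (d \<bullet> d)) < 0"
    proof -
      have "2 * r * (g0 * (n \<bullet> d)) = g0 * (2 * r * (n \<bullet> d))" by (simp add: algebra_simps)
      also have "\<dots> < g0 * (- (d \<bullet> d))" using nd g0 by (rule mult_strict_left_mono)
      finally have "2 * r * (g0 * (n \<bullet> d)) < - g0 * (d \<bullet> d)" by simp
      moreover have "2 * r * (C * (d \<bullet> d)) \<le> g0 * (d \<bullet> d)"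
        using mult_right_mono[OF r(3), of "d \<bullet> d"] by (simp add: mult.assoc)
      ultimately show ?thesis by (simp add: distrib_left)
    qed
    then have "g0 * (n \<bullet> d) + C * (d \<bullet> d) < 0" using r(1) by (simp add: mult_less_0_iff)
    ultimately have "psi x < 0" by linarith
    then show "x \<in> \<Omega>" using xc \<delta>(3) U(5) by auto
  qed
  with r(1) n(1) that show ?thesis unfolding n_def by blast
qed

text \<open>A maximum of \<open>phi\<close> is attained either inside, and then \<open>phi\<close> is constant, or only on the
  boundary, where Hopf's lemma contradicts the vanishing normal derivative.\<close>

lemma harmonic_Neumann_grad_eq_zero:
  fixes phi :: "'a::euclidean_space \<Rightarrow> real"
  assumes \<Omega>: "open \<Omega>" "bounded \<Omega>" "connected \<Omega>" "\<Omega> \<noteq> {}" "smooth_boundary_normal \<Omega> nrm"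
    and V: "open V" "closure \<Omega> \<subseteq> V" "smooth_on_set V phi"
    and harm: "\<And>x. x \<in> \<Omega> \<Longrightarrow> lap phi x = 0"
    and bc: "\<And>x. x \<in> frontier \<Omega> \<Longrightarrow> nrm x \<bullet> grad phi x = 0"
    and x: "x \<in> closure \<Omega>"
  shows "grad phi x = 0"
proof -
  have \<Omega>V: "\<Omega> \<subseteq> V" using V(2) closure_subset by blast
  have cont: "continuous_on (closure \<Omega>) phi"
    using continuous_on_subset[OF smooth_on_set_continuous_on[OF V(3)] V(2)] .
  have "compact (closure \<Omega>)" using \<Omega>(2) by (simp add: compact_closure)
  then obtain xm where xm: "xm \<in> closure \<Omega>" "\<And>x. x \<in> closure \<Omega> \<Longrightarrow> phi x \<le> phi xm"
    using continuous_attains_sup[OF _ _ cont] \<Omega>(4) by fastforce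
  have le: "phi x \<le> phi xm" if "x \<in> \<Omega>" for x using xm(2) closure_subset that by blast
  have const: "phi x = phi xm" if "x \<in> \<Omega>" for x
  proof (cases "\<exists>x1\<in>\<Omega>. phi x1 = phi xm")
    case True
    then obtain x1 where "x1 \<in> \<Omega>" "phi x1 = phi xm" by blast
    from subharmonic_strong_max_principle[OF V(1,3) \<Omega>V \<Omega>(1,3) _ le this that]
    show ?thesis by (simp add: harm)
  next
    case False
    then have less: "phi x < phi xm" if "x \<in> \<Omega>" for x using le[OF that] that by force
    have "xm \<in> frontier \<Omega>" using False xm(1) closure_Un_frontier by auto
    then obtain r where r: "r > 0" "ball (xm - r *\<^sub>R nrm xm) r \<subseteq> \<Omega>" "norm (nrm xm) = 1"
      using interior_ball_condition[OF \<Omega>(5,1)] by blast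
    define y where "y = xm - r *\<^sub>R nrm xm"
    have "pd phi (xm - y) xm > 0"
    proof (rule hopf_lemma[OF V(1,3) _ r(1)])
      have "cball y r \<subseteq> closure \<Omega>" using closure_mono[OF r(2)] r(1) by (simp add: y_def)
      then show "cball y r \<subseteq> V" using V(2) by blast
      show "dist y xm = r" using r(1,3) by (simp add: y_def dist_norm)
      fix x assume "x \<in> ball y r"
      then have "x \<in> \<Omega>" using r(2) by (auto simp: y_def)
      then show "0 \<le> lap phi x" "phi x < phi xm" by (simp_all add: harm less)
    qed
    moreover have "pd phi (xm - y) xm = r * pd phi (nrm xm) xm"
      using pd_scaleR_dir[OF smooth_on_set_differentiable[OF V(3)], of xm r "nrm xm"] xm(1) V(2)
      by (auto simp: y_def)
    moreover have "pd phi (nrm xm) xm = 0"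
      using grad_inner_eq_pd[OF smooth_on_set_differentiable[OF V(3)], of xm "nrm xm"]
        bc[OF \<open>xm \<in> frontier \<Omega>\<close>] xm(1) V(2)
      by (auto simp: inner_commute)
    ultimately show ?thesis by simp
  qed
  have "pd phi h y = 0" if "y \<in> \<Omega>" for y h
    by (rule pd_eq_zero_at_max[OF \<Omega>(1) that smooth_on_set_differentiable[OF V(3)]])
       (use that \<Omega>V const in auto)
  then have "pd phi h x = 0" for h
    using continuous_constant_on_closure[OF continuous_on_subset[OF
        smooth_on_set_continuous_on[OF smooth_on_set_pd[OF V(1,3)]] V(2)] _ x]
    by blast
  then show ?thesis unfolding grad_def dirD_eq_pd by simp
qed

context
  fixes V :: "(real \<times> 'a::euclidean_space) set"
  assumes V: "open V"
begin

lemma field_differentiable: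
  "smooth_on_set V (case_prod w) \<Longrightarrow> (t, x) \<in> V \<Longrightarrow> (w t :: 'a \<Rightarrow> 'b::euclidean_space) differentiable (at x)"
  using slice_differentiable[of "case_prod w" t x] smooth_on_set_differentiable by fastforce

lemma field_pd_differentiable:
  "smooth_on_set V (case_prod w) \<Longrightarrow> (t, x) \<in> V \<Longrightarrow> pd (w t :: 'a \<Rightarrow> 'b::euclidean_space) h differentiable (at x)"
  using pd_slice_differentiable[OF V, of "case_prod w" t x h] by (simp add: pd_eq_frechet_derivative)

lemma field_divg:
  "smooth_on_set V (case_prod w) \<Longrightarrow> (t, x) \<in> V \<Longrightarrow> divg (w t) x = spatial_div (case_prod w) (t, x)"
  using divg_slice[of "case_prod w" t x] smooth_on_set_differentiable by fastforce

lemma field_lap: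
  "smooth_on_set V (case_prod w) \<Longrightarrow> (t, x) \<in> V \<Longrightarrow>
   lap (w t :: 'a \<Rightarrow> 'b::euclidean_space) x = spatial_lap (case_prod w) (t, x)"
  using lap_slice[OF V, of "case_prod w" t x] by simp

lemma field_grad:
  "smooth_on_set V (case_prod q) \<Longrightarrow> (t, x) \<in> V \<Longrightarrow>
   grad (q t) x = (\<Sum>i\<in>Basis. pd (case_prod q) (0, i) (t, x) *\<^sub>R i)"
  using grad_slice[of "case_prod q" t x] smooth_on_set_differentiable by fastforce

lemma field_conv:
  "smooth_on_set V (case_prod w) \<Longrightarrow> (t, x) \<in> V \<Longrightarrow>
   conv v (w t :: 'a \<Rightarrow> 'b::euclidean_space) x = (\<Sum>i\<in>Basis. (v x \<bullet> i) *\<^sub>R pd (case_prod w) (0, i) (t, x))"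
  using conv_slice[of "case_prod w" t x v] smooth_on_set_differentiable by fastforce

lemma field_dt:
  "smooth_on_set V (case_prod w) \<Longrightarrow> t0 < T \<Longrightarrow> t \<in> {t0..T} \<Longrightarrow> (t, x) \<in> V \<Longrightarrow>
   dt t0 T (w :: real \<Rightarrow> 'a \<Rightarrow> 'b::euclidean_space) t x = pd (case_prod w) (1, 0) (t, x)"
  using dt_eq_pd[of t0 T t "case_prod w" x] smooth_on_set_differentiable by fastforce

end

lemma continuous_on_slice:
  "continuous_on V H \<Longrightarrow> (\<And>y. y \<in> S \<Longrightarrow> (t, y) \<in> V) \<Longrightarrow> continuous_on S (\<lambda>y. H (t, y))"
  by (rule continuous_on_compose2[of V H S "Pair t"]) (auto intro: continuous_intros)

lemma leray_proj_divg_eq_zero: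
  assumes "leray_proj \<Omega> nrm v u" "open \<Omega>" "v differentiable (at x)" "x \<in> \<Omega>"
  shows "divg u x = 0"
proof -
  obtain phi :: "'a \<Rightarrow> real" and W where phi: "open W" "closure \<Omega> \<subseteq> W" "smooth_on_set W phi"
    "lap phi x = divg v x" "\<And>x. x \<in> closure \<Omega> \<Longrightarrow> u x = v x - grad phi x"
    using assms(1,4) unfolding leray_proj_def by metis
  have "x \<in> W" using assms(4) phi(2) closure_subset by blast
  then have dphi: "pd phi i differentiable (at x)" for i
    by (rule smooth_on_set_pd_differentiable[OF phi(1,3)])
  have "divg u x = divg (\<lambda>y. v y - grad phi y) x"
    by (rule divg_cong[OF assms(2,4) _ differentiable_diff[OF assms(3) differentiable_grad[OF dphi]]])
       (use phi(5) closure_subset in auto)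
  also have "\<dots> = 0"
    using divg_diff[OF assms(3) differentiable_grad[OF dphi]] divg_grad[OF dphi] phi(4) by simp
  finally show ?thesis .
qed

lemma DERIV_linear_decay_eq_zero:
  fixes f :: "real \<Rightarrow> real"
  assumes f': "\<And>s. s \<in> {t0..T} \<Longrightarrow> (f has_real_derivative - lam * f s) (at s)"
    and "lam \<ge> 0" "f t0 = 0" "t \<in> {t0..T}"
  shows "f t = 0"
proof -
  have "f t * f t \<le> f t0 * f t0"
  proof (rule DERIV_nonpos_imp_nonincreasing[of t0 t "\<lambda>s. f s * f s"])
    fix s assume "t0 \<le> s" "s \<le> t"
    then have "s \<in> {t0..T}" using assms(4) by simp
    from DERIV_mult[OF f'[OF this] f'[OF this]]
    show "\<exists>y. ((\<lambda>s. f s * f s) has_real_derivative y) (at s) \<and> y \<le> 0"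
      using \<open>lam \<ge> 0\<close> by (intro exI conjI) (auto simp: mult_nonneg_nonneg)
  qed (use assms(4) in simp)
  then show ?thesis using \<open>f t0 = 0\<close> by (auto simp: mult_le_0_iff)
qed

lemma eq_zero_if_normal_and_tangential_zero:
  fixes v n :: "'a::real_inner"
  assumes "v \<bullet> n = 0" "\<And>\<tau>. norm \<tau> = 1 \<Longrightarrow> \<tau> \<bullet> n = 0 \<Longrightarrow> v \<bullet> \<tau> = 0"
  shows "v = 0"
proof (rule ccontr)
  assume "v \<noteq> 0"
  then have "v \<bullet> ((1 / norm v) *\<^sub>R v) = 0"
    using assms by (intro assms(2)) (simp_all add: inner_commute)
  with \<open>v \<noteq> 0\<close> show False by simp
qed

locale cylinder =
  fixes \<Omega> :: "'a::euclidean_space set" and t0 T :: real and V :: "(real \<times> 'a) set"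
  assumes open_domain: "open \<Omega>" and open_nbhd: "open V" and t0_less_T: "t0 < T"
    and cylinder_subset: "{t0..T} \<times> closure \<Omega> \<subseteq> V"
begin

lemma mem_nbhd_closure: "t \<in> {t0..T} \<Longrightarrow> x \<in> closure \<Omega> \<Longrightarrow> (t, x) \<in> V"
  using cylinder_subset by auto

lemma mem_nbhd: "t \<in> {t0..T} \<Longrightarrow> x \<in> \<Omega> \<Longrightarrow> (t, x) \<in> V"
  using mem_nbhd_closure closure_subset by blast

text \<open>Every term of the momentum equation extends continuously to the boundary.\<close>

lemma momentum_eq_on_closure:
  fixes g w u :: "real \<Rightarrow> 'a \<Rightarrow> 'a" and q :: "real \<Rightarrow> 'a \<Rightarrow> real"
  assumes smooth: "smooth_on_set V (case_prod g)" "smooth_on_set V (case_prod w)"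
      "smooth_on_set V (case_prod u)" "smooth_on_set V (case_prod q)"
    and t: "t \<in> {t0..T}"
    and mom: "\<And>y. y \<in> \<Omega> \<Longrightarrow> dt t0 T w t y = g t y - conv (u t) (u t) y - grad (q t) y + \<nu> *\<^sub>R lap (w t) y"
    and x: "x \<in> closure \<Omega>"
  shows "dt t0 T w t x = g t x - conv (u t) (u t) x - grad (q t) x + \<nu> *\<^sub>R lap (w t) x"
proof -
  let ?W = "case_prod w" and ?U = "case_prod u"
  define R where "R p = pd ?W (1, 0) p - (case_prod g p - (\<Sum>i\<in>Basis. (?U p \<bullet> i) *\<^sub>R pd ?U (0, i) p)
      - (\<Sum>i\<in>Basis. pd (case_prod q) (0, i) p *\<^sub>R i) + \<nu> *\<^sub>R spatial_lap ?W p)" for p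
  have "continuous_on V R" unfolding R_def
    by (intro continuous_intros smooth_on_set_continuous_on smooth_on_set_pd smooth_on_set_spatial_lap
        open_nbhd smooth)
  have residual: "dt t0 T w t y - (g t y - conv (u t) (u t) y - grad (q t) y + \<nu> *\<^sub>R lap (w t) y) = R (t, y)"
    if "(t, y) \<in> V" for y
    using that by (simp add: R_def field_dt[OF open_nbhd smooth(2) t0_less_T t] field_conv[OF open_nbhd smooth(3)]
        field_grad[OF open_nbhd smooth(4)] field_lap[OF open_nbhd smooth(2)])
  have "R (t, x) = 0"
  proof (rule continuous_constant_on_closure[OF continuous_on_slice[OF \<open>continuous_on V R\<close>] _ x])
    show "(t, y) \<in> V" if "y \<in> closure \<Omega>" for y using mem_nbhd_closure[OF t that] .
    show "R (t, y) = 0" if "y \<in> \<Omega>" for y using residual[OF mem_nbhd[OF t that]] mom[OF that] by simp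
  qed
  then show ?thesis using residual[OF mem_nbhd_closure[OF t x]] by simp
qed

lemma divg_momentum:
  fixes w :: "real \<Rightarrow> 'a \<Rightarrow> 'a" and q :: "real \<Rightarrow> 'a \<Rightarrow> real"
  assumes smooth: "smooth_on_set V (case_prod w)" "smooth_on_set V (case_prod q)"
    and t: "t \<in> {t0..T}" and x: "x \<in> \<Omega>"
    and f: "\<And>y. y \<in> \<Omega> \<Longrightarrow> f y = dt t0 T w t y + grad (q t) y - \<nu> *\<^sub>R lap (w t) y"
  shows "divg f x = pd (spatial_div (case_prod w)) (1, 0) (t, x) + lap (q t) x
    - \<nu> * spatial_lap (spatial_div (case_prod w)) (t, x)"
proof -
  let ?W = "case_prod w"
  have p: "(t, x) \<in> V" by (rule mem_nbhd[OF t x])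
  define X where "X y = pd ?W (1, 0) (t, y)" for y
  define Z where "Z y = spatial_lap ?W (t, y)" for y
  have dX: "X differentiable (at x)" unfolding X_def
    by (rule slice_differentiable, rule smooth_on_set_pd_differentiable[OF open_nbhd smooth(1) p])
  have dZ: "Z differentiable (at x)" unfolding Z_def
    by (rule slice_differentiable, rule smooth_on_set_differentiable[OF
          smooth_on_set_spatial_lap[OF open_nbhd smooth(1)] p])
  have dq: "pd (q t) i differentiable (at x)" for i
    by (rule field_pd_differentiable[OF open_nbhd smooth(2) p])
  have "(\<lambda>y. X y + grad (q t) y - \<nu> *\<^sub>R Z y) differentiable (at x)"
    using dX dZ differentiable_grad[OF dq]
    by (intro differentiable_diff differentiable_add differentiable_scaleR differentiable_const)
  then have "divg f x = divg (\<lambda>y. X y + grad (q t) y - \<nu> *\<^sub>R Z y) x"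
  proof (rule divg_cong[OF open_domain x, rotated])
    fix y assume "y \<in> \<Omega>"
    with mem_nbhd[OF t this] show "f y = X y + grad (q t) y - \<nu> *\<^sub>R Z y"
      by (simp add: f X_def Z_def field_dt[OF open_nbhd smooth(1) t0_less_T t] field_lap[OF open_nbhd smooth(1)])
  qed
  also have "\<dots> = divg X x + divg (grad (q t)) x - \<nu> * divg Z x"
    using dX dZ differentiable_grad[OF dq]
    by (simp add: divg_diff divg_add divg_scaleR differentiable_add differentiable_scaleR)
  also have "divg X x = pd (spatial_div ?W) (1, 0) (t, x)"
    unfolding X_def divg_slice[OF smooth_on_set_pd_differentiable[OF open_nbhd smooth(1) p]]
    by (rule pd_spatial_div[OF open_nbhd smooth(1) p, symmetric])
  also have "divg (grad (q t)) x = lap (q t) x" by (rule divg_grad[OF dq])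
  also have "divg Z x = spatial_lap (spatial_div ?W) (t, x)"
    unfolding Z_def divg_slice[OF smooth_on_set_differentiable[OF
        smooth_on_set_spatial_lap[OF open_nbhd smooth(1)] p]]
    by (rule spatial_lap_spatial_div[OF open_nbhd smooth(1) p, symmetric])
  finally show ?thesis .
qed

end

section \<open>From GePUP-E to the Navier--Stokes equations\<close>

locale GePUP_solution = cylinder \<Omega> t0 T V
  for \<Omega> :: "'a::euclidean_space set" and t0 T V +
  fixes nrm :: "'a \<Rightarrow> 'a" and \<nu> lam :: real and g w u :: "real \<Rightarrow> 'a \<Rightarrow> 'a" and q :: "real \<Rightarrow> 'a \<Rightarrow> real"
  assumes bounded_domain: "bounded \<Omega>" and connected_domain: "connected \<Omega>" and nonempty_domain: "\<Omega> \<noteq> {}"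
    and smooth_boundary: "smooth_boundary_normal \<Omega> nrm" and viscosity_pos: "\<nu> > 0" and penalty_nonneg: "lam \<ge> 0"
    and smooth: "smooth_on_set V (case_prod g)" "smooth_on_set V (case_prod w)"
      "smooth_on_set V (case_prod u)" "smooth_on_set V (case_prod q)"
    and GePUP: "GePUP_E \<Omega> nrm \<nu> lam g t0 T w u q"
begin

lemma momentum:
  "t \<in> {t0..T} \<Longrightarrow> x \<in> \<Omega> \<Longrightarrow> dt t0 T w t x = g t x - conv (u t) (u t) x - grad (q t) x + \<nu> *\<^sub>R lap (w t) x"
  using GePUP unfolding GePUP_E_def by blast

lemma tangential_w:
  "t \<in> {t0..T} \<Longrightarrow> x \<in> frontier \<Omega> \<Longrightarrow> norm \<tau> = 1 \<Longrightarrow> \<tau> \<bullet> nrm x = 0 \<Longrightarrow> w t x \<bullet> \<tau> = 0"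
  using GePUP unfolding GePUP_E_def by blast

lemma divg_w_frontier: "t \<in> {t0..T} \<Longrightarrow> x \<in> frontier \<Omega> \<Longrightarrow> divg (w t) x = 0"
  using GePUP unfolding GePUP_E_def by blast

lemma leray: "t \<in> {t0..T} \<Longrightarrow> leray_proj \<Omega> nrm (w t) (u t)"
  using GePUP unfolding GePUP_E_def by blast

lemma normal_u: "t \<in> {t0..T} \<Longrightarrow> x \<in> frontier \<Omega> \<Longrightarrow> u t x \<bullet> nrm x = 0"
  using GePUP unfolding GePUP_E_def by blast

lemma pressure_poisson:
  "t \<in> {t0..T} \<Longrightarrow> x \<in> \<Omega> \<Longrightarrow> lap (q t) x = divg (\<lambda>y. g t y - conv (u t) (u t) y) x"
  using GePUP unfolding GePUP_E_def by blast

lemma pressure_frontier: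
  "t \<in> {t0..T} \<Longrightarrow> x \<in> frontier \<Omega> \<Longrightarrow>
   nrm x \<bullet> grad (q t) x = nrm x \<bullet> (g t x - conv (u t) (u t) x + \<nu> *\<^sub>R lap (w t) x) + lam * (nrm x \<bullet> w t x)"
  using GePUP unfolding GePUP_E_def by blast

lemma initial: "x \<in> closure \<Omega> \<Longrightarrow> w t0 x = u t0 x"
  using GePUP unfolding GePUP_E_def by blast

lemma divg_u_eq_zero: "t \<in> {t0..T} \<Longrightarrow> x \<in> \<Omega> \<Longrightarrow> divg (u t) x = 0"
  using leray_proj_divg_eq_zero[OF leray open_domain field_differentiable[OF open_nbhd smooth(2) mem_nbhd]] .

lemma spatial_div_w_heat:
  assumes t: "t \<in> {t0..T}" and x: "x \<in> \<Omega>"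
  shows "pd (spatial_div (case_prod w)) (1, 0) (t, x) = \<nu> * spatial_lap (spatial_div (case_prod w)) (t, x)"
proof -
  have "divg (\<lambda>y. g t y - conv (u t) (u t) y) x = pd (spatial_div (case_prod w)) (1, 0) (t, x)
      + lap (q t) x - \<nu> * spatial_lap (spatial_div (case_prod w)) (t, x)"
    by (rule divg_momentum[OF smooth(2,4) t x]) (simp add: momentum[OF t])
  then show ?thesis using pressure_poisson[OF t x] by simp
qed

lemma spatial_div_w_eq_zero:
  assumes t: "t \<in> {t0..T}" and x: "x \<in> closure \<Omega>"
  shows "spatial_div (case_prod w) (t, x) = 0"
proof (rule heat_zero_data_eq_zero[OF open_nbhd smooth_on_set_spatial_div[OF open_nbhd smooth(2)]
      cylinder_subset less_imp_le[OF t0_less_T] open_domain bounded_domain less_imp_le[OF viscosity_pos]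
      spatial_div_w_heat _ _ t x])
  fix y assume y: "y \<in> \<Omega>"
  have t0: "t0 \<in> {t0..T}" using t0_less_T by simp
  have "divg (w t0) y = divg (u t0) y"
    by (rule divg_cong[OF open_domain y _ field_differentiable[OF open_nbhd smooth(3) mem_nbhd[OF t0 y]]])
       (use initial closure_subset in auto)
  then show "spatial_div (case_prod w) (t0, y) = 0"
    using field_divg[OF open_nbhd smooth(2) mem_nbhd[OF t0 y]] divg_u_eq_zero[OF t0 y] by simp
next
  fix s y assume "s \<in> {t0..T}" "y \<in> frontier \<Omega>"
  then show "spatial_div (case_prod w) (s, y) = 0"
    using field_divg[OF open_nbhd smooth(2) mem_nbhd_closure] divg_w_frontier frontier_def by fastforce
qed

text \<open>On the boundary the normal component of the momentum equation, combined with the pressure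
  boundary condition, reduces to \<open>\<partial>\<^sub>t (n \<bullet> w) = - lam (n \<bullet> w)\<close>.\<close>

lemma normal_w_eq_zero:
  assumes t: "t \<in> {t0..T}" and x: "x \<in> frontier \<Omega>"
  shows "w t x \<bullet> nrm x = 0"
proof -
  have xc: "x \<in> closure \<Omega>" using x by (simp add: frontier_def)
  define f where "f s = w s x \<bullet> nrm x" for s
  have f': "(f has_real_derivative - lam * f s) (at s)" if s: "s \<in> {t0..T}" for s
  proof -
    have p: "(s, x) \<in> V" by (rule mem_nbhd_closure[OF s xc])
    have "(f has_real_derivative pd (\<lambda>p. case_prod w p \<bullet> nrm x) (1, 0) (s, x)) (at s)"
      unfolding f_def using has_real_derivative_time smooth_on_set_differentiable[OF
          smooth_on_set_inner_left[OF open_nbhd smooth(2)] p] by fastforce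
    moreover have "pd (\<lambda>p. case_prod w p \<bullet> nrm x) (1, 0) (s, x) = dt t0 T w s x \<bullet> nrm x"
      using pd_inner_left[OF smooth_on_set_differentiable[OF smooth(2) p]]
        field_dt[OF open_nbhd smooth(2) t0_less_T s p] by simp
    moreover have "dt t0 T w s x = g s x - conv (u s) (u s) x - grad (q s) x + \<nu> *\<^sub>R lap (w s) x"
      by (rule momentum_eq_on_closure[OF smooth s momentum[OF s] xc])
    ultimately show ?thesis
      using pressure_frontier[OF s x] unfolding f_def
      by (simp add: inner_commute inner_diff_right inner_add_right)
  qed
  have "f t0 = 0" using initial[OF xc] normal_u[OF _ x] t0_less_T by (simp add: f_def)
  from DERIV_linear_decay_eq_zero[OF f' penalty_nonneg this t] show ?thesis by (simp add: f_def)
qed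

lemma w_eq_u:
  assumes t: "t \<in> {t0..T}" and x: "x \<in> closure \<Omega>"
  shows "w t x = u t x"
proof -
  obtain phi :: "'a \<Rightarrow> real" and W where phi: "open W" "closure \<Omega> \<subseteq> W" "smooth_on_set W phi"
    "\<And>x. x \<in> \<Omega> \<Longrightarrow> lap phi x = divg (w t) x"
    "\<And>x. x \<in> frontier \<Omega> \<Longrightarrow> nrm x \<bullet> grad phi x = nrm x \<bullet> w t x"
    "\<And>x. x \<in> closure \<Omega> \<Longrightarrow> u t x = w t x - grad phi x"
    using leray[OF t] unfolding leray_proj_def by metis
  have "grad phi x = 0"
  proof (rule harmonic_Neumann_grad_eq_zero[OF open_domain bounded_domain connected_domain
        nonempty_domain smooth_boundary phi(1-3) _ _ x])
    fix y assume "y \<in> \<Omega>"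
    then show "lap phi y = 0"
      using phi(4) field_divg[OF open_nbhd smooth(2) mem_nbhd[OF t]] spatial_div_w_eq_zero[OF t]
        closure_subset by fastforce
  next
    fix y assume "y \<in> frontier \<Omega>"
    then show "nrm y \<bullet> grad phi y = 0"
      using phi(5) normal_w_eq_zero[OF t] by (simp add: inner_commute)
  qed
  then show ?thesis using phi(6)[OF x] by simp
qed

lemma INSE_noslip: "INSE_noslip \<Omega> \<nu> g t0 T u q"
  unfolding INSE_noslip_def
proof (intro ballI conjI)
  fix t x assume t: "t \<in> {t0..T}"
  {
    assume x: "x \<in> \<Omega>"
    have p: "(t, x) \<in> V" by (rule mem_nbhd[OF t x])
    have xc: "x \<in> closure \<Omega>" using x closure_subset by blast
    have "((\<lambda>s. case_prod w (s, x)) has_vector_derivative dt t0 T w t x) (at t within {t0..T})"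
      using has_vector_derivative_at_within[OF has_vector_derivative_time[OF
          smooth_on_set_differentiable[OF smooth(2) p]]] field_dt[OF open_nbhd smooth(2) t0_less_T t p]
      by simp
    then have "((\<lambda>s. u s x) has_vector_derivative dt t0 T w t x) (at t within {t0..T})"
      by (rule has_vector_derivative_transform[OF t, rotated]) (use w_eq_u xc in auto)
    then have "dt t0 T u t x = dt t0 T w t x"
      unfolding dt_def[of t0 T u] by (rule vector_derivative_within_closed_interval[OF t0_less_T t])
    moreover have "lap (u t) x = lap (w t) x"
    proof (rule lap_cong[OF open_domain x])
      fix y assume y: "y \<in> \<Omega>"
      then have "y \<in> closure \<Omega>" using closure_subset by blast
      then show "u t y = w t y" using w_eq_u[OF t] by simp
      show "w t differentiable (at y)" by (rule field_differentiable[OF open_nbhd smooth(2) mem_nbhd[OF t y]])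
    qed (rule field_pd_differentiable[OF open_nbhd smooth(2) p])
    ultimately show "dt t0 T u t x + conv (u t) (u t) x = g t x - grad (q t) x + \<nu> *\<^sub>R lap (u t) x"
      using momentum[OF t x] by simp
    show "divg (u t) x = 0" by (rule divg_u_eq_zero[OF t x])
  }
  assume x: "x \<in> frontier \<Omega>"
  then have "x \<in> closure \<Omega>" by (simp add: frontier_def)
  then show "u t x = 0"
    using eq_zero_if_normal_and_tangential_zero[OF normal_u[OF t x]] tangential_w[OF t x] w_eq_u[OF t]
    by simp
qed

end

section \<open>From the Navier--Stokes equations to GePUP-E\<close>

locale INSE_solution = cylinder \<Omega> t0 T V
  for \<Omega> :: "'a::euclidean_space set" and t0 T V +
  fixes \<nu> :: real and g u :: "real \<Rightarrow> 'a \<Rightarrow> 'a" and p :: "real \<Rightarrow> 'a \<Rightarrow> real"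
  assumes smooth: "smooth_on_set V (case_prod g)" "smooth_on_set V (case_prod u)" "smooth_on_set V (case_prod p)"
    and INSE: "INSE_noslip \<Omega> \<nu> g t0 T u p"
begin

lemma momentum:
  "t \<in> {t0..T} \<Longrightarrow> x \<in> \<Omega> \<Longrightarrow> dt t0 T u t x = g t x - conv (u t) (u t) x - grad (p t) x + \<nu> *\<^sub>R lap (u t) x"
  using INSE unfolding INSE_noslip_def by (simp add: algebra_simps)

lemma divg_u_eq_zero: "t \<in> {t0..T} \<Longrightarrow> x \<in> \<Omega> \<Longrightarrow> divg (u t) x = 0"
  using INSE unfolding INSE_noslip_def by blast

lemma no_slip: "t \<in> {t0..T} \<Longrightarrow> x \<in> frontier \<Omega> \<Longrightarrow> u t x = 0"
  using INSE unfolding INSE_noslip_def by blast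

lemma spatial_div_u_eq_zero: "t \<in> {t0..T} \<Longrightarrow> x \<in> \<Omega> \<Longrightarrow> spatial_div (case_prod u) (t, x) = 0"
  using field_divg[OF open_nbhd smooth(2) mem_nbhd] divg_u_eq_zero by simp

lemma pressure_poisson:
  assumes t: "t \<in> {t0..T}" and x: "x \<in> \<Omega>"
  shows "lap (p t) x = divg (\<lambda>y. g t y - conv (u t) (u t) y) x"
proof -
  let ?D = "spatial_div (case_prod u)"
  have D: "smooth_on_set V ?D" by (rule smooth_on_set_spatial_div[OF open_nbhd smooth(2)])
  have "pd ?D (1, 0) (t, x) = dt t0 T (\<lambda>s y. ?D (s, y)) t x"
    by (rule dt_eq_pd[OF t0_less_T t smooth_on_set_differentiable[OF D mem_nbhd[OF t x]], symmetric])
  also have "\<dots> = 0" by (rule dt_eq_zero[OF t0_less_T t]) (simp add: spatial_div_u_eq_zero x)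
  finally have time: "pd ?D (1, 0) (t, x) = 0" .
  have "spatial_lap ?D (t, x) = lap (\<lambda>y. ?D (t, y)) x"
    by (rule lap_slice[OF open_nbhd D mem_nbhd[OF t x], symmetric])
  also have "\<dots> = lap (\<lambda>y. 0 :: real) x"
    by (rule lap_cong[OF open_domain x]) (simp_all add: spatial_div_u_eq_zero[OF t])
  finally have space: "spatial_lap ?D (t, x) = 0" by simp
  have "divg (\<lambda>y. g t y - conv (u t) (u t) y) x = pd ?D (1, 0) (t, x) + lap (p t) x - \<nu> * spatial_lap ?D (t, x)"
    by (rule divg_momentum[OF smooth(2,3) t x]) (simp add: momentum[OF t])
  then show ?thesis using time space by simp
qed

lemma pressure_frontier:
  assumes t: "t \<in> {t0..T}" and x: "x \<in> frontier \<Omega>"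
  shows "grad (p t) x = g t x - conv (u t) (u t) x + \<nu> *\<^sub>R lap (u t) x"
proof -
  have xc: "x \<in> closure \<Omega>" using x by (simp add: frontier_def)
  have "dt t0 T u t x = g t x - conv (u t) (u t) x - grad (p t) x + \<nu> *\<^sub>R lap (u t) x"
    by (rule momentum_eq_on_closure[OF smooth(1,2,2,3) t momentum[OF t] xc])
  moreover have "dt t0 T u t x = 0" by (rule dt_eq_zero[OF t0_less_T t]) (simp add: no_slip x)
  moreover have "conv (u t) (u t) x = 0"
    unfolding conv_def dirD_eq_pd no_slip[OF t x]
    by (rule pd_zero_dir[OF field_differentiable[OF open_nbhd smooth(2) mem_nbhd_closure[OF t xc]]])
  ultimately show ?thesis by (simp add: algebra_simps)
qed

lemma GePUP_E: "GePUP_E \<Omega> nrm \<nu> lam g t0 T u u p"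
  unfolding GePUP_E_def
proof (intro ballI conjI allI impI)
  fix t x assume t: "t \<in> {t0..T}"
  show "dt t0 T u t x = g t x - conv (u t) (u t) x - grad (p t) x + \<nu> *\<^sub>R lap (u t) x" if "x \<in> \<Omega>"
    using momentum[OF t that] .
  show "divg (u t) x = 0" if "x \<in> frontier \<Omega>"
    using field_divg[OF open_nbhd smooth(2) mem_nbhd_closure[OF t]]
      continuous_constant_on_closure[OF continuous_on_slice[OF smooth_on_set_continuous_on[OF
        smooth_on_set_spatial_div[OF open_nbhd smooth(2)]]] spatial_div_u_eq_zero[OF t]]
      mem_nbhd_closure[OF t] that frontier_def by fastforce
  show "leray_proj \<Omega> nrm (u t) (u t)"
    unfolding leray_proj_def
    by (rule exI[of _ "\<lambda>x. 0"]) (auto simp: smooth_on_set_const divg_u_eq_zero[OF t] no_slip[OF t])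
  show "lap (p t) x = divg (\<lambda>y. g t y - conv (u t) (u t) y) x" if "x \<in> \<Omega>"
    by (rule pressure_poisson[OF t that])
  show "nrm x \<bullet> grad (p t) x = nrm x \<bullet> (g t x - conv (u t) (u t) x + \<nu> *\<^sub>R lap (u t) x) + lam * (nrm x \<bullet> u t x)"
    if "x \<in> frontier \<Omega>"
    using pressure_frontier[OF t that] no_slip[OF t that] by simp
qed (auto simp: no_slip)

end

lemma regular_fields_common_nbhd:
  assumes "regular_field t0 T \<Omega> f1" "regular_field t0 T \<Omega> f2" "regular_field t0 T \<Omega> f3"
    "regular_field t0 T \<Omega> f4"
  obtains V where "open V" "{t0..T} \<times> closure \<Omega> \<subseteq> V" "smooth_on_set V (case_prod f1)"
    "smooth_on_set V (case_prod f2)" "smooth_on_set V (case_prod f3)" "smooth_on_set V (case_prod f4)"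
proof -
  from assms obtain V1 V2 V3 V4 where
    "open V1" "{t0..T} \<times> closure \<Omega> \<subseteq> V1" "smooth_on_set V1 (case_prod f1)"
    "open V2" "{t0..T} \<times> closure \<Omega> \<subseteq> V2" "smooth_on_set V2 (case_prod f2)"
    "open V3" "{t0..T} \<times> closure \<Omega> \<subseteq> V3" "smooth_on_set V3 (case_prod f3)"
    "open V4" "{t0..T} \<times> closure \<Omega> \<subseteq> V4" "smooth_on_set V4 (case_prod f4)"
    unfolding regular_field_def by (auto simp: case_prod_unfold)
  then show ?thesis
    by (intro that[of "V1 \<inter> V2 \<inter> V3 \<inter> V4"]) (auto elim!: smooth_on_set_subset[rotated])
qed

theorem theorem6:
  fixes \<Omega> :: "'a::euclidean_space set" and nrm :: "'a \<Rightarrow> 'a"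
    and \<nu> lam t0 T :: real and g :: "real \<Rightarrow> 'a \<Rightarrow> 'a"
  assumes "open \<Omega>" "bounded \<Omega>" "connected \<Omega>" "\<Omega> \<noteq> {}"
    and "smooth_boundary_normal \<Omega> nrm"
    and "\<nu> > 0" "lam \<ge> 0" "t0 < T"
    and "regular_field t0 T \<Omega> g"
  shows "(\<forall>w u q. regular_field t0 T \<Omega> w \<and> regular_field t0 T \<Omega> u \<and> regular_field t0 T \<Omega> q \<and>
            GePUP_E \<Omega> nrm \<nu> lam g t0 T w u q \<longrightarrow>
            (\<forall>t\<in>{t0..T}. \<forall>x\<in>closure \<Omega>. w t x = u t x) \<and> INSE_noslip \<Omega> \<nu> g t0 T u q)
       \<and> (\<forall>u p. regular_field t0 T \<Omega> u \<and> regular_field t0 T \<Omega> p \<and>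
            INSE_noslip \<Omega> \<nu> g t0 T u p \<longrightarrow> GePUP_E \<Omega> nrm \<nu> lam g t0 T u u p)"
proof (rule conjI; intro allI impI; elim conjE)
  fix w u and q :: "real \<Rightarrow> 'a \<Rightarrow> real"
  assume "regular_field t0 T \<Omega> w" "regular_field t0 T \<Omega> u" "regular_field t0 T \<Omega> q"
    and "GePUP_E \<Omega> nrm \<nu> lam g t0 T w u q"
  then obtain V where "open V" "{t0..T} \<times> closure \<Omega> \<subseteq> V" "smooth_on_set V (case_prod g)"
    "smooth_on_set V (case_prod w)" "smooth_on_set V (case_prod u)" "smooth_on_set V (case_prod q)"
    using regular_fields_common_nbhd[OF assms(9)] by metis
  then interpret GePUP_solution \<Omega> t0 T V nrm \<nu> lam g w u q
    using assms \<open>GePUP_E \<Omega> nrm \<nu> lam g t0 T w u q\<close> by unfold_locales auto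
  show "(\<forall>t\<in>{t0..T}. \<forall>x\<in>closure \<Omega>. w t x = u t x) \<and> INSE_noslip \<Omega> \<nu> g t0 T u q"
    using w_eq_u INSE_noslip by blast
next
  fix u and p :: "real \<Rightarrow> 'a \<Rightarrow> real"
  assume "regular_field t0 T \<Omega> u" "regular_field t0 T \<Omega> p" and "INSE_noslip \<Omega> \<nu> g t0 T u p"
  then obtain V where "open V" "{t0..T} \<times> closure \<Omega> \<subseteq> V" "smooth_on_set V (case_prod g)"
    "smooth_on_set V (case_prod u)" "smooth_on_set V (case_prod p)"
    using regular_fields_common_nbhd[OF assms(9) _ _ \<open>regular_field t0 T \<Omega> p\<close>] by metis
  then interpret INSE_solution \<Omega> t0 T V \<nu> g u p
    using assms \<open>INSE_noslip \<Omega> \<nu> g t0 T u p\<close> by unfold_locales auto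
  show "GePUP_E \<Omega> nrm \<nu> lam g t0 T u u p" by (rule GePUP_E)
qed

end
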